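(* Fix $\alpha,m,\tau,k,\gamma>0$ and define for $\lambda>0$ $$\varphi(\lambda)=\frac{\alpha}{2m}\cdot\frac{1}{1+\dfrac{\gamma\tau\lambda+k}{\gamma\lambda(\gamma\tau\lambda+k)+k^2m\lambda}},$$ so that $\|H_{\mathrm{DAPI}}\|_2^2=\sum_{n=2}^N\varphi(\lambda_n)$ where $\lambda_2,\dots,\lambda_N$ are the nonzero eigenvalues of $L_B$. Then $\varphi$ is strictly increasing on $(0,\infty)$. Consequently, if $\mathcal G,\mathcal G'$ are connected graphs on $N$ nodes whose weighted Laplacians have ordered eigenvalues satisfying $\lambda_n\le\lambda_n'$ for all $n$, then $\|H_{\mathrm{DAPI}}\|_2^2$ for $\mathcal G$ is at most that for $\mathcal G'$, whereas $\|H_{\mathrm{std}}\|_2^2=\frac{\alpha}{2m}(N-1)$ does not depend on the graph.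
   Context: $H_{\mathrm{std}}$ and $H_{\mathrm{DAPI}}$ are the linear systems: $H_{\mathrm{std}}$: $\dot\theta=\omega$, $\dot\omega=-\tfrac m\tau L_B\theta-\tfrac1\tau\omega+\tfrac1\tau w$, $y=L_G^{1/2}\theta$; $H_{\mathrm{DAPI}}$: $\dot\theta=\omega$, $\dot\omega=-\tfrac m\tau L_B\theta-\tfrac1\tau\omega+\tfrac1\tau\Omega+\tfrac1\tau w$, $\dot\Omega=-\tfrac1k\omega-\tfrac1k\gamma L_B\Omega$, $y=L_G^{1/2}\theta$, with $L_B$ the weighted Laplacian of a connected graph with positive edge weights and $L_G=\alpha L_B$. $\|H\|_2^2:=\int_0^\infty\operatorname{tr}(Ce^{At}BB^Te^{A^Tt}C^T)\,dt$. *)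

theory Defs
  imports "HOL-Analysis.Analysis"
begin

definition weighted_connected_graph :: "real^'n^'n \<Rightarrow> bool" where
  "weighted_connected_graph W \<longleftrightarrow>
     (\<forall>i j. W$i$j = W$j$i) \<and> (\<forall>i j. W$i$j \<ge> 0) \<and> (\<forall>i. W$i$i = 0) \<and>
     (\<forall>i j. (i, j) \<in> {(a, b). W$a$b > 0}\<^sup>*)"

definition laplacian :: "real^'n^'n \<Rightarrow> real^'n^'n" where
  "laplacian W = (\<chi> i j. if i = j then (\<Sum>k\<in>UNIV - {i}. W$i$k) else - W$i$j)"

definition ordered_eigenvalues :: "real^'n^'n \<Rightarrow> (nat \<Rightarrow> real) \<Rightarrow> bool" where
  "ordered_eigenvalues M lam \<longleftrightarrow>
     (\<forall>i j. 1 \<le> i \<longrightarrow> i \<le> j \<longrightarrow> j \<le> CARD('n) \<longrightarrow> lam i \<le> lam j) \<and>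
     (\<exists>v :: nat \<Rightarrow> real^'n.
        (\<forall>i\<in>{1..CARD('n)}. \<forall>j\<in>{1..CARD('n)}. v i \<bullet> v j = (if i = j then 1 else 0)) \<and>
        (\<forall>i\<in>{1..CARD('n)}. M *v v i = lam i *\<^sub>R v i))"

definition psd_sqrt :: "real^'n^'n \<Rightarrow> real^'n^'n" where
  "psd_sqrt M = (THE S. transpose S = S \<and> (\<forall>x. x \<bullet> (S *v x) \<ge> 0) \<and> S ** S = M)"

definition blin_pow :: "('a::real_normed_vector \<Rightarrow>\<^sub>L 'a) \<Rightarrow> nat \<Rightarrow> ('a \<Rightarrow>\<^sub>L 'a)" where
  "blin_pow M n = ((\<lambda>X. M o\<^sub>L X) ^^ n) id_blinfun"

definition blin_exp :: "('a::real_normed_vector \<Rightarrow>\<^sub>L 'a) \<Rightarrow> ('a \<Rightarrow>\<^sub>L 'a)" where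
  "blin_exp M = (\<Sum>n. (1 / fact n) *\<^sub>R blin_pow M n)"

definition lin_trace :: "('a::euclidean_space \<Rightarrow> 'a) \<Rightarrow> real" where
  "lin_trace f = (\<Sum>b\<in>Basis. b \<bullet> f b)"

definition H2_sq :: "('s::euclidean_space \<Rightarrow>\<^sub>L 's) \<Rightarrow> ('u::euclidean_space \<Rightarrow>\<^sub>L 's)
    \<Rightarrow> ('s \<Rightarrow>\<^sub>L 'y::euclidean_space) \<Rightarrow> real" where
  "H2_sq A B C = integral {0..}
     (\<lambda>t. lin_trace (blinfun_apply (C o\<^sub>L blin_exp (t *\<^sub>R A) o\<^sub>L B)
                     \<circ> adjoint (blinfun_apply (C o\<^sub>L blin_exp (t *\<^sub>R A) o\<^sub>L B))))"

definition A_std :: "real^'n^'n \<Rightarrow> real \<Rightarrow> real \<Rightarrow> ((real^'n) \<times> (real^'n)) \<Rightarrow>\<^sub>L ((real^'n) \<times> (real^'n))" where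
  "A_std L m \<tau> = Blinfun (\<lambda>(\<theta>, \<omega>). (\<omega>, - (m / \<tau>) *\<^sub>R (L *v \<theta>) - (1 / \<tau>) *\<^sub>R \<omega>))"
definition B_std :: "real \<Rightarrow> (real^'n) \<Rightarrow>\<^sub>L ((real^'n) \<times> (real^'n))" where
  "B_std \<tau> = Blinfun (\<lambda>w. (0, (1 / \<tau>) *\<^sub>R w))"
definition C_std :: "real^'n^'n \<Rightarrow> ((real^'n) \<times> (real^'n)) \<Rightarrow>\<^sub>L (real^'n)" where
  "C_std S = Blinfun (\<lambda>(\<theta>, \<omega>). S *v \<theta>)"

definition H2sq_std :: "real^'n^'n \<Rightarrow> real \<Rightarrow> real \<Rightarrow> real \<Rightarrow> real" where
  "H2sq_std W \<alpha> m \<tau> =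
     H2_sq (A_std (laplacian W) m \<tau>) (B_std \<tau>) (C_std (psd_sqrt (\<alpha> *\<^sub>R laplacian W)))"

definition A_dapi :: "real^'n^'n \<Rightarrow> real \<Rightarrow> real \<Rightarrow> real \<Rightarrow> real \<Rightarrow>
    ((real^'n) \<times> (real^'n) \<times> (real^'n)) \<Rightarrow>\<^sub>L ((real^'n) \<times> (real^'n) \<times> (real^'n))" where
  "A_dapi L m \<tau> k \<gamma> = Blinfun (\<lambda>(\<theta>, \<omega>, \<Omega>).
     (\<omega>,
      - (m / \<tau>) *\<^sub>R (L *v \<theta>) - (1 / \<tau>) *\<^sub>R \<omega> + (1 / \<tau>) *\<^sub>R \<Omega>,
      - (1 / k) *\<^sub>R \<omega> - (\<gamma> / k) *\<^sub>R (L *v \<Omega>)))"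
definition B_dapi :: "real \<Rightarrow> (real^'n) \<Rightarrow>\<^sub>L ((real^'n) \<times> (real^'n) \<times> (real^'n))" where
  "B_dapi \<tau> = Blinfun (\<lambda>w. (0, (1 / \<tau>) *\<^sub>R w, 0))"
definition C_dapi :: "real^'n^'n \<Rightarrow> ((real^'n) \<times> (real^'n) \<times> (real^'n)) \<Rightarrow>\<^sub>L (real^'n)" where
  "C_dapi S = Blinfun (\<lambda>(\<theta>, \<omega>, \<Omega>). S *v \<theta>)"

definition H2sq_dapi :: "real^'n^'n \<Rightarrow> real \<Rightarrow> real \<Rightarrow> real \<Rightarrow> real \<Rightarrow> real \<Rightarrow> real" where
  "H2sq_dapi W \<alpha> m \<tau> k \<gamma> =
     H2_sq (A_dapi (laplacian W) m \<tau> k \<gamma>) (B_dapi \<tau>) (C_dapi (psd_sqrt (\<alpha> *\<^sub>R laplacian W)))"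

definition phi :: "real \<Rightarrow> real \<Rightarrow> real \<Rightarrow> real \<Rightarrow> real \<Rightarrow> real \<Rightarrow> real" where
  "phi \<alpha> m \<tau> k \<gamma> x = \<alpha> / (2 * m) *
     (1 / (1 + (\<gamma> * \<tau> * x + k) / (\<gamma> * x * (\<gamma> * \<tau> * x + k) + k\<^sup>2 * m * x)))"

end

theory Submission
  imports Defs "HOL-Real_Asymp.Real_Asymp"
begin

text \<open>Let \<open>0 = lam 1 < lam 2 \<le> \<dots> \<le> lam N\<close> be the Laplacian spectrum, with an orthonormal
  eigenbasis \<open>v\<^sub>i\<close>. For an eigenvector \<open>u\<close> with eigenvalue \<open>lam\<close>, the state matrix of either system
  leaves the blocks \<open>(x u, y u, \<dots>)\<close> invariant and acts on the coordinates \<open>(x, y, \<dots>)\<close> as a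
  small mode matrix in which \<open>L\<close> is replaced by \<open>lam\<close>. So the impulse response is diagonal in
  the basis \<open>v\<^sub>i\<close> and the squared \<open>H\<^sub>2\<close> norm is a sum over modes of \<open>\<integral>\<^sub>0\<^sup>\<infinity> \<alpha> lam\<^sub>i \<theta>\<^sub>i(t)\<^sup>2 dt\<close>,
  where \<open>\<theta>\<^sub>i\<close> is the first coordinate of the impulse response of mode \<open>i\<close>; the zero mode is
  annihilated by the output matrix \<open>\<surd>L\<^sub>G\<close>. Each modal integral is computed with a quadratic
  Lyapunov function \<open>V\<close> satisfying \<open>V' = - \<theta>\<^sup>2\<close> along the mode dynamics: since all modes
  decay, the integral equals \<open>V\<close> at the initial state. This yields \<open>\<alpha> / (2 m)\<close> per nonzero mode
  for the standard system and \<open>phi (lam\<^sub>i)\<close> for DAPI, and \<open>phi\<close> is increasing by a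
  cross-multiplication.\<close>

section \<open>The operator exponential\<close>

text \<open>\<open>blin_exp\<close> is identified with the exponential of the Banach algebra of bounded
  endomorphisms, realised as a copy type of \<open>'a \<Rightarrow>\<^sub>L 'a\<close> carrying the algebra structure.\<close>

typedef (overloaded) ('a::"{banach,perfect_space}") endo = "UNIV :: ('a \<Rightarrow>\<^sub>L 'a) set"
  morphisms endo_rep Endo by auto

setup_lifting type_definition_endo

instantiation endo :: ("{banach,perfect_space}") real_normed_vector
begin
lift_definition norm_endo :: "'a endo \<Rightarrow> real" is norm .
lift_definition minus_endo :: "'a endo \<Rightarrow> 'a endo \<Rightarrow> 'a endo" is "(-)" .
lift_definition plus_endo :: "'a endo \<Rightarrow> 'a endo \<Rightarrow> 'a endo" is "(+)" .
lift_definition uminus_endo :: "'a endo \<Rightarrow> 'a endo" is "uminus" .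
lift_definition zero_endo :: "'a endo" is "0" .
lift_definition scaleR_endo :: "real \<Rightarrow> 'a endo \<Rightarrow> 'a endo" is "scaleR" .
definition dist_endo :: "'a endo \<Rightarrow> 'a endo \<Rightarrow> real" where "dist_endo a b = norm (a - b)"
definition sgn_endo :: "'a endo \<Rightarrow> 'a endo" where "sgn_endo x = scaleR (inverse (norm x)) x"
definition uniformity_endo :: "('a endo \<times> 'a endo) filter"
  where "uniformity_endo = (INF e\<in>{0 <..}. principal {(x, y). dist x y < e})"
definition open_endo :: "'a endo set \<Rightarrow> bool"
  where "open_endo S = (\<forall>x\<in>S. \<forall>\<^sub>F (x', y) in uniformity. x' = x \<longrightarrow> y \<in> S)"
instance
  apply standard
  unfolding dist_endo_def open_endo_def sgn_endo_def uniformity_endo_def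
  apply (rule refl | (transfer, force simp: norm_triangle_ineq algebra_simps))+
  done
end

instantiation endo :: ("{banach,perfect_space}") real_normed_algebra_1
begin
lift_definition times_endo :: "'a endo \<Rightarrow> 'a endo \<Rightarrow> 'a endo" is "(o\<^sub>L)" .
lift_definition one_endo :: "'a endo" is "id_blinfun" .
instance
  apply standard
  apply (transfer; rule blinfun_eqI; simp add: blinfun.bilinear_simps)+
    apply (transfer, metis norm_blinfun_id norm_zero zero_neq_one)
   apply (transfer, rule norm_blinfun_compose)
  apply (transfer, simp)
  done
end

instance endo :: ("{banach,perfect_space}") banach
proof
  fix X :: "nat \<Rightarrow> 'a endo" assume "Cauchy X"
  then have "Cauchy (\<lambda>n. endo_rep (X n))"
    unfolding Cauchy_def dist_norm by transfer
  then obtain L where "(\<lambda>n. endo_rep (X n)) \<longlonglongrightarrow> L"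
    using Cauchy_convergent_iff convergent_def by blast
  then have "X \<longlonglongrightarrow> Endo L"
    unfolding LIMSEQ_def dist_norm by transfer (simp add: Endo_inverse)
  then show "convergent X" by (auto simp: convergent_def)
qed

lemma bounded_linear_endo_rep: "bounded_linear endo_rep"
  by (rule bounded_linear_intro[where K=1]) (transfer, simp)+

lemma endo_rep_power: "endo_rep (x ^ n) = blin_pow (endo_rep x) n"
  by (induction n) (simp_all add: blin_pow_def one_endo.rep_eq times_endo.rep_eq)

lemma endo_rep_exp_series:
  "endo_rep (Endo M ^ n /\<^sub>R fact n) = (1 / fact n) *\<^sub>R blin_pow M n"
  by (simp add: scaleR_endo.rep_eq endo_rep_power Endo_inverse divide_inverse_commute)

lemma summable_blin_exp:
  "summable (\<lambda>n. (1 / fact n) *\<^sub>R blin_pow (M :: 'a::{banach,perfect_space} \<Rightarrow>\<^sub>L 'a) n)"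
  using bounded_linear.summable[OF bounded_linear_endo_rep summable_exp_generic[of "Endo M"]]
  by (simp add: endo_rep_exp_series)

lemma blin_exp_eq_exp: "blin_exp M = endo_rep (exp (Endo M))"
  unfolding exp_def blin_exp_def
  using bounded_linear.suminf[OF bounded_linear_endo_rep summable_exp_generic[of "Endo M"]]
  by (simp add: endo_rep_exp_series)

lemma blin_exp_zero: "blin_exp (0 :: 'a::{banach,perfect_space} \<Rightarrow>\<^sub>L 'a) = id_blinfun"
proof -
  have "Endo 0 = (0 :: 'a endo)" by (metis zero_endo.rep_eq endo_rep_inverse)
  then show ?thesis by (simp add: blin_exp_eq_exp one_endo.rep_eq)
qed

lemma has_vector_derivative_blin_exp:
  fixes M :: "'a::{banach,perfect_space} \<Rightarrow>\<^sub>L 'a"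
  shows "((\<lambda>t. blin_exp (t *\<^sub>R M)) has_vector_derivative M o\<^sub>L blin_exp (t *\<^sub>R M)) (at t within T)"
proof -
  have "((\<lambda>t. exp (t *\<^sub>R Endo M)) has_vector_derivative Endo M * exp (t *\<^sub>R Endo M)) (at t within T)"
    using exp_scaleR_has_vector_derivative_right exp_times_scaleR_commute by metis
  from bounded_linear.has_vector_derivative[OF bounded_linear_endo_rep this] show ?thesis
    by (simp add: blin_exp_eq_exp scaleR_endo.abs_eq times_endo.rep_eq Endo_inverse)
qed

lemma has_vector_derivative_blin_exp_apply:
  fixes M :: "'a::{banach,perfect_space} \<Rightarrow>\<^sub>L 'a"
  shows "((\<lambda>t. blin_exp (t *\<^sub>R M) x) has_vector_derivative M (blin_exp (t *\<^sub>R M) x)) (at t within T)"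
  using bounded_linear.has_vector_derivative[OF blinfun.bounded_linear_left
      has_vector_derivative_blin_exp[of M t T], of x]
  by simp

lemma blinfun_apply_Blinfun_linear:
  fixes f :: "'a::euclidean_space \<Rightarrow> 'b::real_normed_vector"
  shows "linear f \<Longrightarrow> blinfun_apply (Blinfun f) = f"
  by (simp add: bounded_linear_Blinfun_apply linear_conv_bounded_linear)

lemma has_real_derivative_blin_exp_linear:
  fixes M :: "'a::{banach,perfect_space} \<Rightarrow>\<^sub>L 'a"
  assumes "bounded_linear f"
  shows "((\<lambda>t. f (blin_exp (t *\<^sub>R M) p)) has_real_derivative f (M (blin_exp (t *\<^sub>R M) p))) (at t)"
  using bounded_linear.has_vector_derivative[OF assms has_vector_derivative_blin_exp_apply]
  by (simp add: has_real_derivative_iff_has_vector_derivative)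

lemma blin_pow_intertwine:
  assumes "A o\<^sub>L E = E o\<^sub>L B"
  shows "blin_pow A n o\<^sub>L E = E o\<^sub>L blin_pow B n"
proof (induction n)
  case 0
  show ?case by (simp add: blin_pow_def blinfun_eqI)
next
  case (Suc n)
  have "blin_pow A (Suc n) o\<^sub>L E = A o\<^sub>L (blin_pow A n o\<^sub>L E)"
    by (simp add: blin_pow_def blinfun_eqI)
  also have "\<dots> = (A o\<^sub>L E) o\<^sub>L blin_pow B n"
    by (simp add: Suc blinfun_eqI)
  also have "\<dots> = E o\<^sub>L blin_pow B (Suc n)"
    by (simp add: assms blin_pow_def blinfun_eqI)
  finally show ?case .
qed

lemma blin_exp_intertwine:
  fixes A :: "'a::{banach,perfect_space} \<Rightarrow>\<^sub>L 'a" and B :: "'b::{banach,perfect_space} \<Rightarrow>\<^sub>L 'b"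
  assumes "A o\<^sub>L E = E o\<^sub>L B"
  shows "blin_exp A o\<^sub>L E = E o\<^sub>L blin_exp B"
proof -
  interpret compose: bounded_bilinear "(o\<^sub>L)" by (rule bounded_bilinear_blinfun_compose)
  have "blin_exp A o\<^sub>L E = (\<Sum>n. ((1 / fact n) *\<^sub>R blin_pow A n) o\<^sub>L E)"
    unfolding blin_exp_def by (rule bounded_linear.suminf[OF compose.bounded_linear_left summable_blin_exp])
  also have "\<dots> = (\<Sum>n. E o\<^sub>L ((1 / fact n) *\<^sub>R blin_pow B n))"
    by (simp add: blin_pow_intertwine[OF assms] compose.scaleR_left compose.scaleR_right)
  also have "\<dots> = E o\<^sub>L blin_exp B"
    unfolding blin_exp_def
    by (rule bounded_linear.suminf[OF compose.bounded_linear_right summable_blin_exp, symmetric])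
  finally show ?thesis .
qed

section \<open>Decay and squared integrals of the mode dynamics\<close>

lemma nonneg_exp_decay_tendsto_zero:
  fixes G G' :: "real \<Rightarrow> real"
  assumes deriv: "\<And>t. (G has_real_derivative G' t) (at t)"
    and decay: "\<And>t. G' t \<le> - \<delta> * G t" and "\<delta> > 0" and nonneg: "\<And>t. G t \<ge> 0"
  shows "(G \<longlongrightarrow> 0) at_top"
proof -
  define h where "h t = G t * exp (\<delta> * t)" for t
  have h_deriv: "(h has_real_derivative (G' t + \<delta> * G t) * exp (\<delta> * t)) (at t)" for t
    unfolding h_def by (auto intro!: derivative_eq_intros deriv simp: algebra_simps)
  have h_le: "h t \<le> h 0" if "t \<ge> 0" for t
  proof (rule DERIV_nonpos_imp_nonincreasing[OF that])
    fix x
    show "\<exists>y. DERIV h x :> y \<and> y \<le> 0"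
      using h_deriv[of x] decay[of x] by (auto simp: mult_nonpos_nonneg)
  qed
  have bound: "G t \<le> G 0 * exp (- \<delta> * t)" if "t \<ge> 0" for t
  proof -
    have "G t * exp (\<delta> * t) \<le> G 0" using h_le[OF that] by (simp add: h_def)
    then show ?thesis by (simp add: exp_minus field_simps)
  qed
  have "((\<lambda>t. G 0 * exp (- \<delta> * t)) \<longlongrightarrow> 0) at_top"
    using \<open>\<delta> > 0\<close> by real_asymp
  then show ?thesis
  proof (rule Lim_null_comparison[rotated])
    show "\<forall>\<^sub>F t in at_top. norm (G t) \<le> G 0 * exp (- \<delta> * t)"
      using eventually_ge_at_top[of "0::real"] by eventually_elim (use bound nonneg in auto)
  qed
qed

lemma tendsto_zero_if_sq_le:
  fixes f G :: "real \<Rightarrow> real"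
  assumes "(G \<longlongrightarrow> 0) at_top" "\<And>t. c * (f t)\<^sup>2 \<le> G t" "c > 0"
  shows "(f \<longlongrightarrow> 0) at_top"
proof (rule Lim_null_comparison[rotated])
  show "((\<lambda>t. sqrt (G t / c)) \<longlongrightarrow> 0) at_top"
    using tendsto_real_sqrt[OF tendsto_divide_zero[OF assms(1), of c]] by simp
  have "(f t)\<^sup>2 \<le> G t / c" for t
    using assms(2)[of t] assms(3) by (simp add: field_simps mult.commute)
  then show "\<forall>\<^sub>F t in at_top. norm (f t) \<le> sqrt (G t / c)"
    by (intro always_eventually allI) (metis real_norm_def real_sqrt_abs real_sqrt_le_mono)
qed

lemma abs_cross_term_le:
  fixes \<mu> \<tau> p x y :: real
  assumes "\<mu> > 0" "p\<^sup>2 \<le> \<mu> * \<tau>"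
  shows "\<bar>2 * p * x * y\<bar> \<le> \<mu> * x\<^sup>2 + \<tau> * y\<^sup>2"
proof -
  have "\<mu> * (\<mu> * x\<^sup>2 + \<tau> * y\<^sup>2 - s * 2 * p * x * y) = (\<mu> * x - s * p * y)\<^sup>2 + (\<mu> * \<tau> - p\<^sup>2) * y\<^sup>2"
    if "s\<^sup>2 = 1" for s
    using that by (simp add: power2_eq_square algebra_simps)
  moreover have "(\<mu> * x - s * p * y)\<^sup>2 + (\<mu> * \<tau> - p\<^sup>2) * y\<^sup>2 \<ge> 0" for s
    using assms by (intro add_nonneg_nonneg) auto
  ultimately have "s * 2 * p * x * y \<le> \<mu> * x\<^sup>2 + \<tau> * y\<^sup>2" if "s\<^sup>2 = 1" for s
    using that assms by (metis diff_ge_0_iff_ge zero_le_mult_iff linorder_not_le)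
  from this[of 1] this[of "-1"] show ?thesis by (simp add: abs_le_iff)
qed

lemma oscillator_energy_bounds:
  fixes \<mu> \<tau> k e x y z :: real
  assumes "\<mu> > 0" "\<tau> > 0" "k > 0" "(e * \<tau>)\<^sup>2 \<le> \<mu> * \<tau>"
  shows "min (min (\<mu> / 2) (\<tau> / 2)) k * (x\<^sup>2 + y\<^sup>2 + z\<^sup>2) \<le> \<mu> * x\<^sup>2 + \<tau> * y\<^sup>2 + k * z\<^sup>2 + e * \<tau> * x * y"
    and "\<mu> * x\<^sup>2 + \<tau> * y\<^sup>2 + k * z\<^sup>2 + e * \<tau> * x * y \<le> (2 * \<mu> + 2 * \<tau> + k) * (x\<^sup>2 + y\<^sup>2 + z\<^sup>2)"
proof -
  have cross: "\<bar>2 * (e * \<tau>) * x * y\<bar> \<le> \<mu> * x\<^sup>2 + \<tau> * y\<^sup>2"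
    by (rule abs_cross_term_le) (use assms in auto)
  have "min (min (\<mu> / 2) (\<tau> / 2)) k * (x\<^sup>2 + y\<^sup>2 + z\<^sup>2) \<le> \<mu> / 2 * x\<^sup>2 + \<tau> / 2 * y\<^sup>2 + k * z\<^sup>2"
    unfolding distrib_left by (intro add_mono mult_right_mono) auto
  then show "min (min (\<mu> / 2) (\<tau> / 2)) k * (x\<^sup>2 + y\<^sup>2 + z\<^sup>2)
      \<le> \<mu> * x\<^sup>2 + \<tau> * y\<^sup>2 + k * z\<^sup>2 + e * \<tau> * x * y"
    using cross by (simp add: abs_le_iff)
  have "2 * \<mu> * x\<^sup>2 + 2 * \<tau> * y\<^sup>2 + k * z\<^sup>2 \<le> (2 * \<mu> + 2 * \<tau> + k) * (x\<^sup>2 + y\<^sup>2 + z\<^sup>2)"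
    using assms by (simp add: algebra_simps)
  then show "\<mu> * x\<^sup>2 + \<tau> * y\<^sup>2 + k * z\<^sup>2 + e * \<tau> * x * y \<le> (2 * \<mu> + 2 * \<tau> + k) * (x\<^sup>2 + y\<^sup>2 + z\<^sup>2)"
    using cross assms by (simp add: abs_le_iff)
qed

lemma oscillator_energy_dissipation:
  fixes \<mu> \<tau> g e x y z :: real
  assumes "\<mu> > 0" "e > 0" "e * (\<tau> + 1 / \<mu>) \<le> 1" "e / \<mu> \<le> g"
  shows "- 2 * y\<^sup>2 - 2 * g * z\<^sup>2 + e * (\<tau> * y\<^sup>2 - \<mu> * x\<^sup>2 - x * y + x * z)
    \<le> - min (min (e * \<mu> / 2) 1) g * (x\<^sup>2 + y\<^sup>2 + z\<^sup>2)"
proof -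
  \<comment> \<open>Young's inequality on the indefinite terms \<open>- x y\<close> and \<open>x z\<close>\<close>
  have "- (x * y) \<le> \<mu> / 4 * x\<^sup>2 + y\<^sup>2 / \<mu>" "x * z \<le> \<mu> / 4 * x\<^sup>2 + z\<^sup>2 / \<mu>"
    using assms zero_le_power2[of "\<mu> / 2 * x + y"] zero_le_power2[of "\<mu> / 2 * x - z"]
    by (simp_all add: power2_eq_square field_simps)
  then have "e * (\<tau> * y\<^sup>2 - \<mu> * x\<^sup>2 - x * y + x * z)
      \<le> e * (\<tau> * y\<^sup>2 - \<mu> * x\<^sup>2 + (\<mu> / 4 * x\<^sup>2 + y\<^sup>2 / \<mu>) + (\<mu> / 4 * x\<^sup>2 + z\<^sup>2 / \<mu>))"
    using assms by (intro mult_left_mono) auto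
  also have "\<dots> = e * (\<tau> + 1 / \<mu>) * y\<^sup>2 - e * \<mu> / 2 * x\<^sup>2 + e / \<mu> * z\<^sup>2"
    using assms by (simp add: field_simps)
  also have "\<dots> \<le> 1 * y\<^sup>2 - e * \<mu> / 2 * x\<^sup>2 + g * z\<^sup>2"
    using assms by (intro add_mono diff_mono mult_right_mono) auto
  finally have "- 2 * y\<^sup>2 - 2 * g * z\<^sup>2 + e * (\<tau> * y\<^sup>2 - \<mu> * x\<^sup>2 - x * y + x * z)
      \<le> - (e * \<mu> / 2 * x\<^sup>2 + 1 * y\<^sup>2 + g * z\<^sup>2)"
    by simp
  also have "\<dots> \<le> - (min (min (e * \<mu> / 2) 1) g * (x\<^sup>2 + y\<^sup>2 + z\<^sup>2))"
    unfolding neg_le_iff_le distrib_left by (intro add_mono mult_right_mono) auto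
  finally show ?thesis by simp
qed

text \<open>A quadratic Lyapunov function for the damped oscillator \<open>\<theta>' = \<omega>\<close>,
  \<open>\<tau> \<omega>' = - \<mu> \<theta> - \<omega> + u\<close> driven by a dissipative state \<open>u\<close>; the small cross term
  \<open>e \<tau> \<theta> \<omega>\<close> makes the decay rate strictly negative also in the \<open>\<theta>\<close> direction.\<close>

lemma oscillator_lyapunov_form:
  fixes \<mu> \<tau> k g :: real
  assumes "\<mu> > 0" "\<tau> > 0" "k > 0" "g > 0"
  obtains c C d e where "c > 0" "C > 0" "d > 0"
    "\<And>x y z. c * (x\<^sup>2 + y\<^sup>2 + z\<^sup>2) \<le> \<mu> * x\<^sup>2 + \<tau> * y\<^sup>2 + k * z\<^sup>2 + e * \<tau> * x * y"
    "\<And>x y z. \<mu> * x\<^sup>2 + \<tau> * y\<^sup>2 + k * z\<^sup>2 + e * \<tau> * x * y \<le> C * (x\<^sup>2 + y\<^sup>2 + z\<^sup>2)"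
    "\<And>x y z. - 2 * y\<^sup>2 - 2 * g * z\<^sup>2 + e * (\<tau> * y\<^sup>2 - \<mu> * x\<^sup>2 - x * y + x * z)
       \<le> - d * (x\<^sup>2 + y\<^sup>2 + z\<^sup>2)"
proof -
  define e where "e = min (\<mu> * g) (\<mu> / (\<mu> * \<tau> + 1))"
  have e_pos: "e > 0" using assms by (simp add: e_def add_pos_pos)
  have e_g: "e / \<mu> \<le> g" using assms by (simp add: e_def divide_le_eq mult.commute)
  have "e \<le> \<mu> / (\<mu> * \<tau> + 1)" by (simp add: e_def)
  then have "e * (\<mu> * \<tau> + 1) \<le> \<mu>" using assms by (simp add: le_divide_eq add_pos_pos)
  then have e_damp: "e * (\<tau> + 1 / \<mu>) \<le> 1" using assms by (simp add: field_simps)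
  have "e * \<tau> \<le> e * (\<tau> + 1 / \<mu>)" using e_pos assms by (simp add: distrib_left)
  then have "e * \<tau> \<le> 1" using e_damp by linarith
  have "\<mu> / (\<mu> * \<tau> + 1) \<le> \<mu>" using assms by (simp add: divide_le_eq add_pos_pos)
  then have "e * \<tau> \<le> \<mu> * \<tau>" using assms by (simp add: e_def min_le_iff_disj)
  with \<open>e * \<tau> \<le> 1\<close> have "(e * \<tau>)\<^sup>2 \<le> 1 * (\<mu> * \<tau>)"
    unfolding power2_eq_square using e_pos assms by (intro mult_mono) auto
  then show ?thesis
    using that[OF _ _ _ oscillator_energy_bounds oscillator_energy_dissipation[OF assms(1) e_pos e_damp e_g]]
      assms e_pos by simp
qed

text \<open>The hypothesis on \<open>u'\<close> is the energy balance \<open>(k u\<^sup>2 / 2)' = - \<omega> u - g u\<^sup>2\<close> of the DAPI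
  integrator state; \<open>u = 0\<close> gives the plain damped oscillator.\<close>

lemma forced_oscillator_tendsto_zero:
  fixes \<mu> \<tau> k g :: real and \<theta> \<omega> u u' :: "real \<Rightarrow> real"
  assumes "\<mu> > 0" "\<tau> > 0" "k > 0" "g > 0"
    and \<theta>: "\<And>t. (\<theta> has_real_derivative \<omega> t) (at t)"
    and \<omega>: "\<And>t. (\<omega> has_real_derivative (- \<mu> * \<theta> t - \<omega> t + u t) / \<tau>) (at t)"
    and u: "\<And>t. (u has_real_derivative u' t) (at t)"
    and dissipation: "\<And>t. k * u' t * u t = - (\<omega> t + g * u t) * u t"
  shows "(\<theta> \<longlongrightarrow> 0) at_top \<and> (\<omega> \<longlongrightarrow> 0) at_top \<and> (u \<longlongrightarrow> 0) at_top"
proof -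
  obtain c C d e where "c > 0" "C > 0" "d > 0"
    and lower: "\<And>x y z. c * (x\<^sup>2 + y\<^sup>2 + z\<^sup>2) \<le> \<mu> * x\<^sup>2 + \<tau> * y\<^sup>2 + k * z\<^sup>2 + e * \<tau> * x * y"
    and upper: "\<And>x y z. \<mu> * x\<^sup>2 + \<tau> * y\<^sup>2 + k * z\<^sup>2 + e * \<tau> * x * y \<le> C * (x\<^sup>2 + y\<^sup>2 + z\<^sup>2)"
    and decay: "\<And>x y z. - 2 * y\<^sup>2 - 2 * g * z\<^sup>2 + e * (\<tau> * y\<^sup>2 - \<mu> * x\<^sup>2 - x * y + x * z)
       \<le> - d * (x\<^sup>2 + y\<^sup>2 + z\<^sup>2)"
    using oscillator_lyapunov_form[OF assms(1-4)] by metis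
  define S where "S t = (\<theta> t)\<^sup>2 + (\<omega> t)\<^sup>2 + (u t)\<^sup>2" for t
  define G where "G t = \<mu> * (\<theta> t)\<^sup>2 + \<tau> * (\<omega> t)\<^sup>2 + k * (u t)\<^sup>2 + e * \<tau> * \<theta> t * \<omega> t" for t
  define G' where "G' t = - 2 * (\<omega> t)\<^sup>2 - 2 * g * (u t)\<^sup>2
    + e * (\<tau> * (\<omega> t)\<^sup>2 - \<mu> * (\<theta> t)\<^sup>2 - \<theta> t * \<omega> t + \<theta> t * u t)" for t
  have G_deriv: "(G has_real_derivative G' t) (at t)" for t
    unfolding G_def
    by (rule derivative_eq_intros \<theta> \<omega> u refl)+
      (use \<open>\<tau> > 0\<close> dissipation[of t] in \<open>simp add: G'_def field_simps power2_eq_square; algebra\<close>)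
  have G_decay: "G' t \<le> - (d / C) * G t" for t
  proof -
    have "(d / C) * G t \<le> (d / C) * (C * S t)"
      unfolding G_def S_def using upper \<open>d > 0\<close> \<open>C > 0\<close> by (intro mult_left_mono) auto
    then show ?thesis
      using decay[where x="\<theta> t" and y="\<omega> t" and z="u t"] \<open>C > 0\<close> by (simp add: G'_def S_def)
  qed
  have G_ge: "c * S t \<le> G t" for t
    unfolding G_def S_def by (rule lower)
  have "c * S t \<ge> 0" for t
    using \<open>c > 0\<close> by (simp add: S_def)
  then have "G t \<ge> 0" for t
    using G_ge order_trans by blast
  then have G_lim: "(G \<longlongrightarrow> 0) at_top"
    using nonneg_exp_decay_tendsto_zero[OF G_deriv G_decay] \<open>d > 0\<close> \<open>C > 0\<close> by simp
  have "c * (f t)\<^sup>2 \<le> G t" if "f = \<theta> \<or> f = \<omega> \<or> f = u" for f t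
  proof -
    have "c * (f t)\<^sup>2 \<le> c * S t"
      using that \<open>c > 0\<close> by (intro mult_left_mono) (auto simp: S_def)
    then show ?thesis using G_ge[of t] by linarith
  qed
  then show ?thesis
    using tendsto_zero_if_sq_le[OF G_lim _ \<open>c > 0\<close>] by blast
qed

lemma lyapunov_has_integral:
  fixes V h :: "real \<Rightarrow> real"
  assumes V: "\<And>t. (V has_real_derivative - h t) (at t)"
    and V_lim: "(V \<longlongrightarrow> 0) at_top" and h_nonneg: "\<And>t. h t \<ge> 0"
  shows "(h has_integral V 0) {0..}"
proof -
  have ftc: "(h has_integral V 0 - V y) {0..y}" if "0 \<le> y" for y
  proof -
    have "((\<lambda>t. - V t) has_vector_derivative h x) (at x within {0..y})" for x
      using DERIV_minus[OF V[of x]]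
      by (simp add: has_real_derivative_iff_has_vector_derivative has_vector_derivative_at_within)
    from fundamental_theorem_of_calculus[OF that this] show ?thesis by simp
  qed
  show ?thesis
  proof (rule has_integral_to_inf)
    show "h integrable_on {0..y}" for y
      using ftc by (cases "0 \<le> y") auto
    have "((\<lambda>y. V 0 - V y) \<longlongrightarrow> V 0) at_top"
      using tendsto_diff[OF tendsto_const V_lim] by simp
    moreover have "\<forall>\<^sub>F y in at_top. V 0 - V y = integral {0..y} h"
      using eventually_ge_at_top[of "0::real"]
      by eventually_elim (use ftc integral_unique in metis)
    ultimately show "((\<lambda>y. integral {0..y} h) \<longlongrightarrow> V 0) at_top"
      by (rule Lim_transform_eventually)
  qed (rule h_nonneg)
qed

lemma damped_oscillator_sq_integral:
  fixes \<mu> \<tau> \<omega>\<^sub>0 :: real and \<theta> \<omega> :: "real \<Rightarrow> real"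
  assumes "\<mu> > 0" "\<tau> > 0"
    and \<theta>: "\<And>t. (\<theta> has_real_derivative \<omega> t) (at t)"
    and \<omega>: "\<And>t. (\<omega> has_real_derivative (- \<mu> * \<theta> t - \<omega> t) / \<tau>) (at t)"
    and "\<theta> 0 = 0" "\<omega> 0 = \<omega>\<^sub>0"
  shows "((\<lambda>t. (\<theta> t)\<^sup>2) has_integral \<tau>\<^sup>2 * \<omega>\<^sub>0\<^sup>2 / (2 * \<mu>)) {0..}"
proof -
  define V where "V t = (1 / \<mu> + \<tau>) / 2 * (\<theta> t)\<^sup>2 + \<tau> / \<mu> * \<theta> t * \<omega> t + \<tau>\<^sup>2 / (2 * \<mu>) * (\<omega> t)\<^sup>2" for t
  have V_deriv: "(V has_real_derivative - (\<theta> t)\<^sup>2) (at t)" for t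
    unfolding V_def
    by (rule derivative_eq_intros \<theta> \<omega> refl)+ (use assms in \<open>simp add: field_simps power2_eq_square\<close>)
  have "(\<omega> has_real_derivative (- \<mu> * \<theta> t - \<omega> t + 0) / \<tau>) (at t)" for t
    using \<omega> by simp
  then have "(\<theta> \<longlongrightarrow> 0) at_top \<and> (\<omega> \<longlongrightarrow> 0) at_top"
    using forced_oscillator_tendsto_zero[where k=1 and g=1 and u="\<lambda>_. 0" and u'="\<lambda>_. 0",
        OF assms(1,2) _ _ \<theta>]
    by simp
  then have "(V \<longlongrightarrow> (1 / \<mu> + \<tau>) / 2 * 0\<^sup>2 + \<tau> / \<mu> * 0 * 0 + \<tau>\<^sup>2 / (2 * \<mu>) * 0\<^sup>2) at_top"
    unfolding V_def by (intro tendsto_intros) auto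
  then have "((\<lambda>t. (\<theta> t)\<^sup>2) has_integral V 0) {0..}"
    by (intro lyapunov_has_integral V_deriv) simp_all
  moreover have "V 0 = \<tau>\<^sup>2 * \<omega>\<^sub>0\<^sup>2 / (2 * \<mu>)"
    using assms(5,6) by (simp add: V_def)
  ultimately show ?thesis by simp
qed

text \<open>The coefficients solve the Lyapunov equation of the mode system
  \<open>x' = y\<close>, \<open>\<tau> y' = - \<mu> x - y + z\<close>, \<open>k z' = - y - g z\<close> with right-hand side \<open>- x\<^sup>2\<close>; they are
  found by matching the six monomials of the derivative, which is a triangular linear system.\<close>

lemma dapi_oscillator_lyapunov_form:
  fixes \<mu> g k \<tau> :: real
  assumes pos: "\<mu> > 0" "g > 0" "k > 0" "\<tau> > 0"
  obtains a b c d e f where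
    "\<And>x y z. let y' = (- \<mu> * x - y + z) / \<tau>; z' = (- y - g * z) / k in
       2 * a * x * y + b * (y * y + x * y') + c * (y * z + x * z')
       + 2 * d * y * y' + e * (y' * z + y * z') + 2 * f * z * z' = - x\<^sup>2"
    "d = \<tau>\<^sup>2 * (k\<^sup>2 * \<mu> + g * k + g\<^sup>2 * \<tau>) / (2 * \<mu> * (k\<^sup>2 * \<mu> + g * k + g\<^sup>2 * \<tau> + g * \<tau> + k))"
proof -
  define D where "D = k\<^sup>2 * \<mu> + g * k + g\<^sup>2 * \<tau> + g * \<tau> + k"
  have "D > 0" using pos by (simp add: D_def add_pos_pos)
  define b where "b = \<tau> / \<mu>"
  define e where "e = b * k * (k + g * \<tau>) / D"
  define f where "f = k * e / (2 * g * \<tau>)"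
  define d where "d = \<tau> * (b - e / k) / 2"
  define c where "c = k * (b - \<mu> * e) / (g * \<tau>)"
  define a where "a = (b / \<tau> + c / k + 2 * \<mu> * d / \<tau>) / 2"
  have xx: "- (\<mu> / \<tau>) * b = -1" using pos by (simp add: b_def)
  have xy: "2 * a - b / \<tau> - c / k - 2 * \<mu> * d / \<tau> = 0" by (simp add: a_def field_simps)
  have xz: "b / \<tau> - g * c / k - \<mu> * e / \<tau> = 0" using pos by (simp add: c_def field_simps)
  have yy: "b - 2 * d / \<tau> - e / k = 0" using pos by (simp add: d_def field_simps)
  have zz: "e / \<tau> - 2 * g * f / k = 0" using pos by (simp add: f_def field_simps)
  have yz: "c + 2 * d / \<tau> - e / \<tau> - g * e / k - 2 * f / k = 0"
  proof -
    have "g * \<tau> * k * (c + 2 * d / \<tau> - e / \<tau> - g * e / k - 2 * f / k)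
        = k * k * b + g * \<tau> * k * b - e * (k\<^sup>2 * \<mu> + g * \<tau> + g * k + g\<^sup>2 * \<tau> + k)"
      using pos by (simp add: c_def d_def f_def field_simps power2_eq_square)
    also have "\<dots> = 0"
    proof -
      have "e * D = b * k * (k + g * \<tau>)" using \<open>D > 0\<close> by (simp add: e_def)
      then show ?thesis by (simp add: D_def algebra_simps power2_eq_square)
    qed
    finally show ?thesis using pos by simp
  qed
  show ?thesis
  proof
    fix x y z :: real
    have "2 * a * x * y + b * (y * y + x * ((- \<mu> * x - y + z) / \<tau>))
        + c * (y * z + x * ((- y - g * z) / k)) + 2 * d * y * ((- \<mu> * x - y + z) / \<tau>)
        + e * ((- \<mu> * x - y + z) / \<tau> * z + y * ((- y - g * z) / k)) + 2 * f * z * ((- y - g * z) / k)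
      = (- (\<mu> / \<tau>) * b) * x\<^sup>2 + (2 * a - b / \<tau> - c / k - 2 * \<mu> * d / \<tau>) * (x * y)
        + (b / \<tau> - g * c / k - \<mu> * e / \<tau>) * (x * z) + (b - 2 * d / \<tau> - e / k) * y\<^sup>2
        + (c + 2 * d / \<tau> - e / \<tau> - g * e / k - 2 * f / k) * (y * z)
        + (e / \<tau> - 2 * g * f / k) * z\<^sup>2"
      using pos by (simp add: field_simps power2_eq_square)
    then show "let y' = (- \<mu> * x - y + z) / \<tau>; z' = (- y - g * z) / k in
       2 * a * x * y + b * (y * y + x * y') + c * (y * z + x * z')
       + 2 * d * y * y' + e * (y' * z + y * z') + 2 * f * z * z' = - x\<^sup>2"
      unfolding xx xy xz yy yz zz Let_def by simp
  next
    have "e / k = b * (k + g * \<tau>) / D" using pos by (simp add: e_def)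
    then have "b - e / k = b * (D - (k + g * \<tau>)) / D" using \<open>D > 0\<close> by (simp add: field_simps)
    also have "D - (k + g * \<tau>) = k\<^sup>2 * \<mu> + g * k + g\<^sup>2 * \<tau>" by (simp add: D_def)
    finally have "b - e / k = b * (k\<^sup>2 * \<mu> + g * k + g\<^sup>2 * \<tau>) / D" .
    then show "d = \<tau>\<^sup>2 * (k\<^sup>2 * \<mu> + g * k + g\<^sup>2 * \<tau>) / (2 * \<mu> * (k\<^sup>2 * \<mu> + g * k + g\<^sup>2 * \<tau> + g * \<tau> + k))"
      by (simp add: d_def b_def D_def power2_eq_square mult_ac)
  qed
qed

lemma dapi_oscillator_sq_integral:
  fixes \<mu> g k \<tau> \<omega>\<^sub>0 :: real and \<theta> \<omega> \<Omega> :: "real \<Rightarrow> real"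
  assumes pos: "\<mu> > 0" "g > 0" "k > 0" "\<tau> > 0"
    and \<theta>: "\<And>t. (\<theta> has_real_derivative \<omega> t) (at t)"
    and \<omega>: "\<And>t. (\<omega> has_real_derivative (- \<mu> * \<theta> t - \<omega> t + \<Omega> t) / \<tau>) (at t)"
    and \<Omega>: "\<And>t. (\<Omega> has_real_derivative (- \<omega> t - g * \<Omega> t) / k) (at t)"
    and init: "\<theta> 0 = 0" "\<omega> 0 = \<omega>\<^sub>0" "\<Omega> 0 = 0"
  shows "((\<lambda>t. (\<theta> t)\<^sup>2) has_integral
     \<tau>\<^sup>2 * (k\<^sup>2 * \<mu> + g * k + g\<^sup>2 * \<tau>) * \<omega>\<^sub>0\<^sup>2 / (2 * \<mu> * (k\<^sup>2 * \<mu> + g * k + g\<^sup>2 * \<tau> + g * \<tau> + k))) {0..}"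
proof -
  obtain a b c d e f where lyap: "\<And>x y z. let y' = (- \<mu> * x - y + z) / \<tau>; z' = (- y - g * z) / k in
       2 * a * x * y + b * (y * y + x * y') + c * (y * z + x * z')
       + 2 * d * y * y' + e * (y' * z + y * z') + 2 * f * z * z' = - x\<^sup>2"
    and d: "d = \<tau>\<^sup>2 * (k\<^sup>2 * \<mu> + g * k + g\<^sup>2 * \<tau>) / (2 * \<mu> * (k\<^sup>2 * \<mu> + g * k + g\<^sup>2 * \<tau> + g * \<tau> + k))"
    using dapi_oscillator_lyapunov_form[OF pos] by blast
  define V where "V t = a * (\<theta> t)\<^sup>2 + b * \<theta> t * \<omega> t + c * \<theta> t * \<Omega> t
    + d * (\<omega> t)\<^sup>2 + e * \<omega> t * \<Omega> t + f * (\<Omega> t)\<^sup>2" for t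
  have V_deriv: "(V has_real_derivative - (\<theta> t)\<^sup>2) (at t)" for t
    unfolding V_def
    by (rule derivative_eq_intros \<theta> \<omega> \<Omega> refl)+
      (use lyap[of "\<theta> t" "\<omega> t" "\<Omega> t"] in \<open>simp add: Let_def power2_eq_square algebra_simps\<close>)
  have "(\<theta> \<longlongrightarrow> 0) at_top \<and> (\<omega> \<longlongrightarrow> 0) at_top \<and> (\<Omega> \<longlongrightarrow> 0) at_top"
    by (rule forced_oscillator_tendsto_zero[OF pos(1,4,3,2) \<theta> \<omega> \<Omega>]) (use pos in \<open>simp add: field_simps\<close>)
  then have "(V \<longlongrightarrow> a * 0\<^sup>2 + b * 0 * 0 + c * 0 * 0 + d * 0\<^sup>2 + e * 0 * 0 + f * 0\<^sup>2) at_top"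
    unfolding V_def by (intro tendsto_intros) auto
  then have "((\<lambda>t. (\<theta> t)\<^sup>2) has_integral V 0) {0..}"
    by (intro lyapunov_has_integral V_deriv) simp_all
  moreover have "V 0 = d * \<omega>\<^sub>0\<^sup>2" by (simp add: V_def init)
  ultimately show ?thesis by (simp add: d)
qed

section \<open>Orthonormal eigenbases, the graph Laplacian and the positive square root\<close>

definition onb :: "(nat \<Rightarrow> real^'n) \<Rightarrow> bool" where
  "onb v \<longleftrightarrow> (\<forall>i\<in>{1..CARD('n)}. \<forall>j\<in>{1..CARD('n)}. v i \<bullet> v j = (if i = j then 1 else 0))"

lemma onb_inner:
  "onb v \<Longrightarrow> i \<in> {1..CARD('n)} \<Longrightarrow> j \<in> {1..CARD('n)} \<Longrightarrow> v i \<bullet> v j = (if i = j then 1 else 0)"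
  for v :: "nat \<Rightarrow> real^'n"
  by (simp add: onb_def)

lemma onb_span:
  fixes v :: "nat \<Rightarrow> real^'n"
  assumes "onb v"
  shows "span (v ` {1..CARD('n)}) = UNIV"
proof -
  let ?I = "{1..CARD('n)}"
  have "inj_on v ?I"
    by (rule inj_onI) (metis onb_inner[OF assms] zero_neq_one)
  then have card: "card (v ` ?I) = DIM(real^'n)" by (simp add: card_image)
  have "pairwise orthogonal (v ` ?I)"
    unfolding pairwise_def orthogonal_def using onb_inner[OF assms] by fastforce
  moreover have "0 \<notin> v ` ?I"
    using onb_inner[OF assms] by fastforce
  ultimately have "independent (v ` ?I)" by (rule pairwise_orthogonal_independent)
  then have "dim (v ` ?I) = DIM(real^'n)" using card dim_eq_card_independent by metis
  then show ?thesis by (rule dim_eq_full[THEN iffD1])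
qed

lemma onb_inner_sum:
  fixes v :: "nat \<Rightarrow> real^'n"
  assumes "onb v" and "i \<in> {1..CARD('n)}"
  shows "v i \<bullet> (\<Sum>j\<in>{1..CARD('n)}. c j *\<^sub>R v j) = c i"
proof -
  have "v i \<bullet> (\<Sum>j\<in>{1..CARD('n)}. c j *\<^sub>R v j) = (\<Sum>j\<in>{1..CARD('n)}. if j = i then c j else 0)"
    unfolding inner_sum_right by (rule sum.cong) (use assms in \<open>auto simp: onb_inner\<close>)
  then show ?thesis using assms(2) by simp
qed

lemma onb_expand:
  fixes v :: "nat \<Rightarrow> real^'n"
  assumes "onb v"
  shows "x = (\<Sum>i\<in>{1..CARD('n)}. (v i \<bullet> x) *\<^sub>R v i)"
proof -
  define y where "y = x - (\<Sum>i\<in>{1..CARD('n)}. (v i \<bullet> x) *\<^sub>R v i)"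
  have "orthogonal y (v i)" if "i \<in> {1..CARD('n)}" for i
    using onb_inner_sum[OF assms that, of "\<lambda>j. v j \<bullet> x"]
    by (simp add: y_def orthogonal_def inner_diff_right inner_commute)
  then have "orthogonal y y"
    using orthogonal_to_span[of y "v ` {1..CARD('n)}"] onb_span[OF assms] by blast
  then show ?thesis by (simp add: y_def orthogonal_self)
qed

lemma onb_parseval:
  fixes v :: "nat \<Rightarrow> real^'n"
  assumes "onb v"
  shows "x \<bullet> y = (\<Sum>i\<in>{1..CARD('n)}. (v i \<bullet> x) * (v i \<bullet> y))"
  by (subst onb_expand[OF assms, of x]) (simp add: inner_sum_left)

lemma onb_matrix_vector_mult:
  fixes M :: "real^'n^'n" and v :: "nat \<Rightarrow> real^'n"
  assumes "onb v" and "\<And>i. i \<in> {1..CARD('n)} \<Longrightarrow> M *v v i = \<mu> i *\<^sub>R v i"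
  shows "M *v x = (\<Sum>i\<in>{1..CARD('n)}. (\<mu> i * (v i \<bullet> x)) *\<^sub>R v i)"
  by (subst onb_expand[OF assms(1), of x])
    (simp add: vec.sum matrix_vector_mult_scaleR assms(2) mult.commute)

lemma symmetric_matrix_inner:
  fixes M :: "real^'n^'n"
  assumes "transpose M = M"
  shows "(M *v x) \<bullet> y = x \<bullet> (M *v y)"
  by (metis assms dot_lmul_matrix transpose_matrix_vector)

lemma laplacian_mult_vec_nth:
  fixes W :: "real^'n^'n"
  assumes "\<And>i. W$i$i = 0"
  shows "(laplacian W *v x) $ i = (\<Sum>j\<in>UNIV. W$i$j * (x$i - x$j))"
proof -
  have "(laplacian W *v x) $ i = (\<Sum>k\<in>UNIV - {i}. W$i$k) * x$i + (\<Sum>j\<in>UNIV - {i}. - W$i$j * x$j)"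
    by (simp add: matrix_vector_mult_def sum.remove[of UNIV i] laplacian_def)
  also have "\<dots> = (\<Sum>j\<in>UNIV - {i}. W$i$j * (x$i - x$j))"
    by (simp add: sum_distrib_right sum_distrib_left sum_subtractf[symmetric] algebra_simps
        sum.distrib[symmetric] sum_negf)
  also have "\<dots> = (\<Sum>j\<in>UNIV. W$i$j * (x$i - x$j))"
    by (simp add: sum.remove[of UNIV i] assms)
  finally show ?thesis .
qed

lemma transpose_laplacian:
  "(\<And>i j. W$i$j = W$j$i) \<Longrightarrow> transpose (laplacian W) = laplacian W"
  by (simp add: vec_eq_iff transpose_def laplacian_def)

lemma laplacian_mult_ones:
  fixes W :: "real^'n^'n"
  assumes "\<And>i. W$i$i = 0"
  shows "laplacian W *v 1 = 0"
  by (simp add: vec_eq_iff laplacian_mult_vec_nth[OF assms])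

lemma laplacian_quadratic_form:
  fixes W :: "real^'n^'n"
  assumes "\<And>i. W$i$i = 0" and sym: "\<And>i j. W$i$j = W$j$i"
  shows "x \<bullet> (laplacian W *v x) = (\<Sum>i\<in>UNIV. \<Sum>j\<in>UNIV. W$i$j * (x$i - x$j)\<^sup>2) / 2"
proof -
  define S where "S = (\<Sum>i\<in>UNIV. \<Sum>j\<in>UNIV. W$i$j * (x$i * (x$i - x$j)))"
  have form: "x \<bullet> (laplacian W *v x) = S"
    by (simp add: inner_vec_def laplacian_mult_vec_nth[OF assms(1)] S_def sum_distrib_left algebra_simps)
  have "S = (\<Sum>i\<in>UNIV. \<Sum>j\<in>UNIV. W$i$j * (x$j * (x$j - x$i)))"
    unfolding S_def by (subst sum.swap) (simp add: sym)
  then have "2 * S = S + (\<Sum>i\<in>UNIV. \<Sum>j\<in>UNIV. W$i$j * (x$j * (x$j - x$i)))"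
    by simp
  also have "\<dots> = (\<Sum>i\<in>UNIV. \<Sum>j\<in>UNIV. W$i$j * (x$i - x$j)\<^sup>2)"
    by (simp add: S_def sum.distrib[symmetric] power2_eq_square algebra_simps)
  finally show ?thesis using form by simp
qed

lemma laplacian_psd:
  fixes W :: "real^'n^'n"
  assumes "weighted_connected_graph W"
  shows "x \<bullet> (laplacian W *v x) \<ge> 0"
  using assms unfolding weighted_connected_graph_def
  by (subst laplacian_quadratic_form) (auto intro!: divide_nonneg_pos sum_nonneg mult_nonneg_nonneg)

text \<open>Connectivity enters only here: the quadratic form vanishes exactly on the constant vectors.\<close>

lemma laplacian_form_eq_zero_imp_const:
  fixes W :: "real^'n^'n"
  assumes W: "weighted_connected_graph W" and "x \<bullet> (laplacian W *v x) = 0"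
  shows "x$a = x$b"
proof -
  have diag: "\<And>i. W$i$i = 0" and sym: "\<And>i j. W$i$j = W$j$i" and nn: "\<And>i j. W$i$j \<ge> 0"
    and conn: "\<And>i j. (i, j) \<in> {(a, b). W$a$b > 0}\<^sup>*"
    using W by (auto simp: weighted_connected_graph_def)
  have "(\<Sum>i\<in>UNIV. \<Sum>j\<in>UNIV. W$i$j * (x$i - x$j)\<^sup>2) = 0"
    using assms(2) unfolding laplacian_quadratic_form[OF diag sym] by simp
  then have zero: "W$i$j * (x$i - x$j)\<^sup>2 = 0" for i j
    by (simp add: sum_nonneg_eq_0_iff sum_nonneg nn)
  have edge: "x$i = x$j" if "W$i$j > 0" for i j
    using zero[of i j] that by simp
  from conn[of a b] show ?thesis
    by (induction rule: rtrancl_induct) (auto dest: edge)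
qed

lemma laplacian_eigenvalue_nonneg:
  fixes W :: "real^'n^'n"
  assumes "weighted_connected_graph W" "laplacian W *v u = lam *\<^sub>R u" "u \<bullet> u = 1"
  shows "lam \<ge> 0"
  using laplacian_psd[OF assms(1), of u] assms(2,3) by simp

lemma laplacian_eigenvalue_zero_unique:
  fixes W :: "real^'n^'n" and v :: "nat \<Rightarrow> real^'n"
  assumes W: "weighted_connected_graph W" and "onb v"
    and ev: "\<And>i. i \<in> {1..CARD('n)} \<Longrightarrow> laplacian W *v v i = lam i *\<^sub>R v i"
    and ij: "i \<in> {1..CARD('n)}" "j \<in> {1..CARD('n)}" "lam i = 0" "lam j = 0"
  shows "i = j"
proof -
  have const: "v l = vec (v l $ a)" if "l \<in> {1..CARD('n)}" "lam l = 0" for l a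
    using laplacian_form_eq_zero_imp_const[OF W, of "v l"] ev[OF that(1)] that(2)
    by (simp add: vec_eq_iff)
  fix a :: 'n
  have "v i \<bullet> v j = real CARD('n) * (v i $ a * v j $ a)"
    by (subst (1 2) const) (use ij in \<open>simp_all add: inner_vec_def\<close>)
  moreover have "v i \<bullet> v i = real CARD('n) * (v i $ a * v i $ a)"
    by (subst (1 2) const) (use ij in \<open>simp_all add: inner_vec_def\<close>)
  moreover have "v j \<bullet> v j = real CARD('n) * (v j $ a * v j $ a)"
    by (subst (1 2) const) (use ij in \<open>simp_all add: inner_vec_def\<close>)
  ultimately show ?thesis
    using onb_inner[OF \<open>onb v\<close>] ij by (metis mult_eq_0_iff zero_neq_one)
qed

lemma laplacian_eigenvalue_zero_exists:
  fixes W :: "real^'n^'n" and v :: "nat \<Rightarrow> real^'n"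
  assumes W: "weighted_connected_graph W" and "onb v"
    and ev: "\<And>i. i \<in> {1..CARD('n)} \<Longrightarrow> laplacian W *v v i = lam i *\<^sub>R v i"
  shows "\<exists>i\<in>{1..CARD('n)}. lam i = 0"
proof (rule ccontr)
  assume no_zero: "\<not> (\<exists>i\<in>{1..CARD('n)}. lam i = 0)"
  have diag: "\<And>i. W$i$i = 0" and sym: "\<And>i j. W$i$j = W$j$i"
    using W by (auto simp: weighted_connected_graph_def)
  have "lam j * (v j \<bullet> 1) = 0" if "j \<in> {1..CARD('n)}" for j
  proof -
    have "lam j * (v j \<bullet> 1) = (laplacian W *v v j) \<bullet> 1" by (simp add: ev[OF that])
    also have "\<dots> = v j \<bullet> (laplacian W *v 1)"
      by (rule symmetric_matrix_inner[OF transpose_laplacian[OF sym]])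
    finally show ?thesis by (simp add: laplacian_mult_ones[OF diag])
  qed
  then have "(1::real^'n) \<bullet> 1 = 0"
    using onb_parseval[OF \<open>onb v\<close>, of 1 1] no_zero by simp
  then show False by (simp add: inner_vec_def)
qed

lemma psd_root_eigenvector:
  fixes M S :: "real^'n^'n"
  assumes sym: "transpose S = S" and psd: "\<And>x. x \<bullet> (S *v x) \<ge> 0" and root: "S ** S = M"
    and eig: "M *v u = m *\<^sub>R u" and "m \<ge> 0"
  shows "S *v u = sqrt m *\<^sub>R u"
proof -
  define w where "w = S *v u - sqrt m *\<^sub>R u"
  have "S *v w + sqrt m *\<^sub>R w = S *v (S *v u) - (sqrt m * sqrt m) *\<^sub>R u"
    by (simp add: w_def matrix_vector_mult_diff_distrib matrix_vector_mult_scaleR algebra_simps)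
  also have "\<dots> = 0" using eig \<open>m \<ge> 0\<close> by (simp add: matrix_vector_mul_assoc root)
  finally have Sw: "S *v w = - sqrt m *\<^sub>R w" by (simp add: eq_neg_iff_add_eq_0)
  show ?thesis
  proof (cases "m = 0")
    case True
    have "(S *v u) \<bullet> (S *v u) = u \<bullet> (M *v u)"
      by (simp add: symmetric_matrix_inner[OF sym] matrix_vector_mul_assoc root)
    then show ?thesis using eig True by simp
  next
    case False
    have "0 \<le> w \<bullet> (S *v w)" by (rule psd)
    also have "\<dots> = - sqrt m * (w \<bullet> w)" by (simp add: Sw)
    moreover have "sqrt m > 0" using False \<open>m \<ge> 0\<close> by simp
    ultimately have "w \<bullet> w \<le> 0" by (simp add: mult_le_0_iff)
    then have "w = 0" by (metis inner_ge_zero inner_eq_zero_iff order_antisym)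
    then show ?thesis by (simp add: w_def)
  qed
qed

lemma onb_psd_root_exists:
  fixes M :: "real^'n^'n" and v :: "nat \<Rightarrow> real^'n"
  assumes onb: "onb v" and eig: "\<And>i. i \<in> {1..CARD('n)} \<Longrightarrow> M *v v i = \<mu> i *\<^sub>R v i"
    and nonneg: "\<And>i. i \<in> {1..CARD('n)} \<Longrightarrow> \<mu> i \<ge> 0"
  shows "\<exists>S. transpose S = S \<and> (\<forall>x. x \<bullet> (S *v x) \<ge> 0) \<and> S ** S = M"
proof -
  let ?I = "{1..CARD('n)}"
  define S :: "real^'n^'n" where "S = (\<chi> a b. \<Sum>i\<in>?I. sqrt (\<mu> i) * (v i $ a) * (v i $ b))"
  have S_mult: "S *v x = (\<Sum>i\<in>?I. (sqrt (\<mu> i) * (v i \<bullet> x)) *\<^sub>R v i)" for x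
  proof -
    have "(S *v x) $ a = (\<Sum>i\<in>?I. \<Sum>b\<in>UNIV. sqrt (\<mu> i) * (v i $ a) * (v i $ b) * x $ b)" for a
      unfolding S_def matrix_vector_mult_def by (simp add: sum_distrib_right sum.swap[of _ UNIV])
    then show ?thesis
      by (simp add: vec_eq_iff sum_component inner_vec_def sum_distrib_left mult_ac)
  qed
  have "transpose S = S" by (simp add: S_def transpose_def vec_eq_iff mult_ac)
  moreover have "x \<bullet> (S *v x) \<ge> 0" for x
    unfolding S_mult inner_sum_right
    by (intro sum_nonneg) (simp add: inner_commute mult.assoc mult_nonneg_nonneg nonneg)
  moreover have "S ** S = M"
  proof (subst matrix_eq, intro allI)
    fix x
    have "(S ** S) *v x = (\<Sum>i\<in>?I. (sqrt (\<mu> i) * (v i \<bullet> (S *v x))) *\<^sub>R v i)"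
      by (simp add: matrix_vector_mul_assoc[symmetric] S_mult)
    also have "\<dots> = (\<Sum>i\<in>?I. (\<mu> i * (v i \<bullet> x)) *\<^sub>R v i)"
    proof (rule sum.cong[OF refl])
      fix i assume i: "i \<in> ?I"
      have "v i \<bullet> (S *v x) = sqrt (\<mu> i) * (v i \<bullet> x)"
        unfolding S_mult by (rule onb_inner_sum[OF onb i])
      then show "(sqrt (\<mu> i) * (v i \<bullet> (S *v x))) *\<^sub>R v i = (\<mu> i * (v i \<bullet> x)) *\<^sub>R v i"
        using nonneg[OF i] by (simp add: mult.assoc[symmetric])
    qed
    also have "\<dots> = M *v x" by (rule onb_matrix_vector_mult[OF onb eig, symmetric])
    finally show "(S ** S) *v x = M *v x" .
  qed
  ultimately show ?thesis by blast
qed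

lemma psd_sqrt_onb_eigenvector:
  fixes M :: "real^'n^'n" and v :: "nat \<Rightarrow> real^'n"
  assumes onb: "onb v" and eig: "\<And>i. i \<in> {1..CARD('n)} \<Longrightarrow> M *v v i = \<mu> i *\<^sub>R v i"
    and nonneg: "\<And>i. i \<in> {1..CARD('n)} \<Longrightarrow> \<mu> i \<ge> 0"
    and i: "i \<in> {1..CARD('n)}"
  shows "psd_sqrt M *v v i = sqrt (\<mu> i) *\<^sub>R v i"
proof -
  let ?root = "\<lambda>S::real^'n^'n. transpose S = S \<and> (\<forall>x. x \<bullet> (S *v x) \<ge> 0) \<and> S ** S = M"
  have root_eig: "S *v v j = sqrt (\<mu> j) *\<^sub>R v j" if "?root S" "j \<in> {1..CARD('n)}" for S j
    using psd_root_eigenvector[of S M "v j" "\<mu> j"] that eig nonneg by blast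
  have expand: "T *v x = (\<Sum>j\<in>{1..CARD('n)}. (v j \<bullet> x) *\<^sub>R (T *v v j))" for T :: "real^'n^'n" and x
    by (subst (1) onb_expand[OF onb, of x]) (simp add: vec.sum matrix_vector_mult_scaleR)
  have "S = S'" if "?root S" "?root S'" for S S'
  proof (subst matrix_eq, intro allI)
    fix x
    show "S *v x = S' *v x"
      unfolding expand[of S x] expand[of S' x]
      by (intro sum.cong) (simp_all add: root_eig[OF that(1)] root_eig[OF that(2)])
  qed
  with onb_psd_root_exists[OF onb eig nonneg] have "\<exists>!S. ?root S" by blast
  then have "?root (psd_sqrt M)" unfolding psd_sqrt_def by (rule theI')
  then show ?thesis by (rule root_eig[OF _ i])
qed

lemma laplacian_spectral_data:
  fixes W :: "real^'n^'n"
  assumes W: "weighted_connected_graph W" and "ordered_eigenvalues (laplacian W) lam" and "\<alpha> \<ge> 0"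
  obtains v where "onb v" "\<And>i. i \<in> {1..CARD('n)} \<Longrightarrow> laplacian W *v v i = lam i *\<^sub>R v i"
    "lam 1 = 0" "\<And>i. i \<in> {2..CARD('n)} \<Longrightarrow> lam i > 0"
    "\<And>i. i \<in> {1..CARD('n)} \<Longrightarrow> psd_sqrt (\<alpha> *\<^sub>R laplacian W) *v v i = sqrt (\<alpha> * lam i) *\<^sub>R v i"
proof -
  let ?I = "{1..CARD('n)}"
  obtain v where onb: "onb v" and ev: "\<And>i. i \<in> ?I \<Longrightarrow> laplacian W *v v i = lam i *\<^sub>R v i"
    and sorted: "\<And>i j. 1 \<le> i \<Longrightarrow> i \<le> j \<Longrightarrow> j \<le> CARD('n) \<Longrightarrow> lam i \<le> lam j"
    using assms(2) unfolding ordered_eigenvalues_def onb_def by blast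
  have nonneg: "lam i \<ge> 0" if "i \<in> ?I" for i
    using laplacian_eigenvalue_nonneg[OF W ev[OF that]] onb_inner[OF onb that that] by simp
  obtain i\<^sub>0 where "i\<^sub>0 \<in> ?I" "lam i\<^sub>0 = 0"
    using laplacian_eigenvalue_zero_exists[OF W onb ev] by blast
  then have lam1: "lam 1 = 0"
    using sorted[of 1 i\<^sub>0] nonneg[of 1] by fastforce
  have "lam i > 0" if "i \<in> {2..CARD('n)}" for i
    using laplacian_eigenvalue_zero_unique[OF W onb ev, of i 1] nonneg[of i] lam1 that
    by fastforce
  moreover have "psd_sqrt (\<alpha> *\<^sub>R laplacian W) *v v i = sqrt (\<alpha> * lam i) *\<^sub>R v i" if "i \<in> ?I" for i
  proof (rule psd_sqrt_onb_eigenvector[OF onb _ _ that])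
    show "(\<alpha> *\<^sub>R laplacian W) *v v j = (\<alpha> * lam j) *\<^sub>R v j" if "j \<in> ?I" for j
      using ev[OF that] by (simp flip: scaleR_matrix_vector_assoc)
    show "\<alpha> * lam j \<ge> 0" if "j \<in> ?I" for j
      using nonneg[OF that] \<open>\<alpha> \<ge> 0\<close> by simp
  qed
  ultimately show ?thesis using that[OF onb ev lam1] by blast
qed

section \<open>Modal decomposition of the \<open>H\<^sub>2\<close> norm\<close>

lemma lin_trace_onb_diagonal:
  fixes F :: "real^'n \<Rightarrow> real^'n" and v :: "nat \<Rightarrow> real^'n"
  assumes onb: "onb v" and F: "\<And>x. F x = (\<Sum>i\<in>{1..CARD('n)}. (\<kappa> i * (v i \<bullet> x)) *\<^sub>R v i)"
  shows "lin_trace (F \<circ> adjoint F) = (\<Sum>i\<in>{1..CARD('n)}. (\<kappa> i)\<^sup>2)"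
proof -
  let ?I = "{1..CARD('n)}"
  have F_coord: "v i \<bullet> F x = \<kappa> i * (v i \<bullet> x)" if "i \<in> ?I" for i x
    unfolding F by (rule onb_inner_sum[OF onb that])
  have "adjoint F = F"
  proof (rule adjoint_unique, intro allI)
    fix x y
    have "F x \<bullet> y = (\<Sum>i\<in>?I. (v i \<bullet> F x) * (v i \<bullet> y))" by (rule onb_parseval[OF onb])
    also have "\<dots> = (\<Sum>i\<in>?I. (v i \<bullet> x) * (v i \<bullet> F y))"
      by (rule sum.cong[OF refl]) (simp add: F_coord)
    also have "\<dots> = x \<bullet> F y" by (rule onb_parseval[OF onb, symmetric])
    finally show "F x \<bullet> y = x \<bullet> F y" .
  qed
  moreover have "b \<bullet> F (F b) = (\<Sum>i\<in>?I. (\<kappa> i)\<^sup>2 * (v i \<bullet> b)\<^sup>2)" for b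
  proof -
    have "b \<bullet> F (F b) = (\<Sum>i\<in>?I. \<kappa> i * (v i \<bullet> F b) * (b \<bullet> v i))"
      by (simp add: F[of "F b"] inner_sum_right)
    also have "\<dots> = (\<Sum>i\<in>?I. (\<kappa> i)\<^sup>2 * (v i \<bullet> b)\<^sup>2)"
      by (rule sum.cong[OF refl]) (simp add: F_coord power2_eq_square inner_commute[of b])
    finally show ?thesis .
  qed
  ultimately have "lin_trace (F \<circ> adjoint F) = (\<Sum>i\<in>?I. (\<kappa> i)\<^sup>2 * (\<Sum>b\<in>Basis. (v i \<bullet> b)\<^sup>2))"
    by (simp add: lin_trace_def sum_distrib_left sum.swap[of _ Basis])
  also have "\<dots> = (\<Sum>i\<in>?I. (\<kappa> i)\<^sup>2)"
    by (rule sum.cong[OF refl])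
      (simp add: euclidean_inner[symmetric] power2_eq_square onb_inner[OF onb])
  finally show ?thesis .
qed

lemma H2_sq_onb_diagonal:
  fixes A :: "'s::euclidean_space \<Rightarrow>\<^sub>L 's" and B :: "(real^'n) \<Rightarrow>\<^sub>L 's" and C :: "'s \<Rightarrow>\<^sub>L (real^'n)"
    and v :: "nat \<Rightarrow> real^'n"
  assumes onb: "onb v"
    and response: "\<And>t x. (C o\<^sub>L blin_exp (t *\<^sub>R A) o\<^sub>L B) x
                  = (\<Sum>i\<in>{1..CARD('n)}. (\<kappa> i t * (v i \<bullet> x)) *\<^sub>R v i)"
    and modes: "\<And>i. i \<in> {1..CARD('n)} \<Longrightarrow> ((\<lambda>t. (\<kappa> i t)\<^sup>2) has_integral r i) {0..}"
  shows "H2_sq A B C = (\<Sum>i\<in>{1..CARD('n)}. r i)"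
proof -
  have "lin_trace (blinfun_apply (C o\<^sub>L blin_exp (t *\<^sub>R A) o\<^sub>L B)
      \<circ> adjoint (blinfun_apply (C o\<^sub>L blin_exp (t *\<^sub>R A) o\<^sub>L B))) = (\<Sum>i\<in>{1..CARD('n)}. (\<kappa> i t)\<^sup>2)" for t
    by (rule lin_trace_onb_diagonal[OF onb response])
  moreover have "((\<lambda>t. \<Sum>i\<in>{1..CARD('n)}. (\<kappa> i t)\<^sup>2) has_integral (\<Sum>i\<in>{1..CARD('n)}. r i)) {0..}"
    by (rule has_integral_sum) (auto intro: modes)
  ultimately show ?thesis unfolding H2_sq_def by (simp add: integral_unique)
qed

lemma impulse_response_onb_expansion:
  fixes A :: "'s::euclidean_space \<Rightarrow>\<^sub>L 's" and B :: "(real^'n) \<Rightarrow>\<^sub>L 's" and C :: "'s \<Rightarrow>\<^sub>L (real^'n)"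
    and E :: "real^'n \<Rightarrow> (real \<times> 'b::euclidean_space) \<Rightarrow>\<^sub>L 's"
    and M :: "real \<Rightarrow> (real \<times> 'b) \<Rightarrow>\<^sub>L (real \<times> 'b)"
    and L S :: "real^'n^'n" and v :: "nat \<Rightarrow> real^'n"
  assumes onb: "onb v"
    and ev: "\<And>i. i \<in> {1..CARD('n)} \<Longrightarrow> L *v v i = lam i *\<^sub>R v i"
    and Sv: "\<And>i. i \<in> {1..CARD('n)} \<Longrightarrow> S *v v i = \<kappa> i *\<^sub>R v i"
    and intertwine: "\<And>u \<mu>. L *v u = \<mu> *\<^sub>R u \<Longrightarrow> A o\<^sub>L E u = E u o\<^sub>L M \<mu>"
    and input_block: "\<And>x. B x = E x p"
    and embed_linear: "\<And>q. linear (\<lambda>u. E u q)"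
    and output_block: "\<And>u q. C (E u q) = fst q *\<^sub>R (S *v u)"
  shows "(C o\<^sub>L blin_exp (t *\<^sub>R A) o\<^sub>L B) x
    = (\<Sum>i\<in>{1..CARD('n)}. (\<kappa> i * fst (blin_exp (t *\<^sub>R M (lam i)) p) * (v i \<bullet> x)) *\<^sub>R v i)"
proof -
  interpret compose: bounded_bilinear "(o\<^sub>L)" by (rule bounded_bilinear_blinfun_compose)
  have flow: "blin_exp (t *\<^sub>R A) (E (v i) q) = E (v i) (blin_exp (t *\<^sub>R M (lam i)) q)"
    if "i \<in> {1..CARD('n)}" for i q
  proof -
    have "(t *\<^sub>R A) o\<^sub>L E (v i) = E (v i) o\<^sub>L (t *\<^sub>R M (lam i))"
      using intertwine[OF ev[OF that]] by (simp add: compose.scaleR_left compose.scaleR_right)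
    from blin_exp_intertwine[OF this] show ?thesis by (metis blinfun_apply_blinfun_compose)
  qed
  have "B x = (\<Sum>i\<in>{1..CARD('n)}. (v i \<bullet> x) *\<^sub>R E (v i) p)"
    by (subst input_block, subst onb_expand[OF onb, of x])
      (simp add: linear_sum[OF embed_linear] linear_cmul[OF embed_linear])
  then have "(C o\<^sub>L blin_exp (t *\<^sub>R A) o\<^sub>L B) x
      = (\<Sum>i\<in>{1..CARD('n)}. (v i \<bullet> x) *\<^sub>R C (blin_exp (t *\<^sub>R A) (E (v i) p)))"
    by (simp add: blinfun.sum_right blinfun.scaleR_right)
  also have "\<dots> = (\<Sum>i\<in>{1..CARD('n)}. (\<kappa> i * fst (blin_exp (t *\<^sub>R M (lam i)) p) * (v i \<bullet> x)) *\<^sub>R v i)"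
    by (rule sum.cong[OF refl]) (simp add: flow output_block Sv)
  finally show ?thesis .
qed

section \<open>The two systems\<close>

text \<open>For an eigenvector \<open>u\<close> of \<open>L\<close> with eigenvalue \<open>lam\<close>, the plane \<open>{(x u, y u)}\<close> is invariant
  under \<open>A_std\<close>, which acts on the coordinates \<open>(x, y)\<close> by \<open>std_mode\<close>; likewise for DAPI.\<close>

definition std_embed :: "real^'n \<Rightarrow> (real \<times> real) \<Rightarrow>\<^sub>L ((real^'n) \<times> (real^'n))" where
  "std_embed u = Blinfun (\<lambda>q. (fst q *\<^sub>R u, snd q *\<^sub>R u))"

definition std_mode :: "real \<Rightarrow> real \<Rightarrow> real \<Rightarrow> (real \<times> real) \<Rightarrow>\<^sub>L (real \<times> real)" where
  "std_mode m \<tau> lam = Blinfun (\<lambda>q. (snd q, - (m / \<tau>) * lam * fst q - snd q / \<tau>))"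

lemma std_embed_apply: "std_embed u q = (fst q *\<^sub>R u, snd q *\<^sub>R u)"
  unfolding std_embed_def
  by (subst blinfun_apply_Blinfun_linear) (auto intro: linearI simp: algebra_simps)

lemma std_mode_apply: "std_mode m \<tau> lam q = (snd q, - (m / \<tau>) * lam * fst q - snd q / \<tau>)"
  unfolding std_mode_def
  by (subst blinfun_apply_Blinfun_linear)
    (auto intro!: linearI simp: algebra_simps add_divide_distrib diff_divide_distrib)

lemma A_std_apply: "A_std L m \<tau> (\<theta>, \<omega>) = (\<omega>, - (m / \<tau>) *\<^sub>R (L *v \<theta>) - (1 / \<tau>) *\<^sub>R \<omega>)"
  unfolding A_std_def
  by (subst blinfun_apply_Blinfun_linear)
    (auto intro!: linearI simp: matrix_vector_right_distrib matrix_vector_mult_scaleR algebra_simps)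

lemma B_std_apply: "B_std \<tau> w = (0, (1 / \<tau>) *\<^sub>R w)"
  unfolding B_std_def
  by (subst blinfun_apply_Blinfun_linear) (auto intro: linearI simp: algebra_simps)

lemma C_std_apply:
  fixes S :: "real^'n^'n"
  shows "C_std S (\<theta>, \<omega>) = S *v \<theta>"
proof -
  have "linear (\<lambda>(\<theta>, \<omega> :: real^'n). S *v \<theta>)"
    by (intro linearI) (auto simp: matrix_vector_right_distrib matrix_vector_mult_scaleR)
  then have "blinfun_apply (Blinfun (\<lambda>(\<theta>, \<omega> :: real^'n). S *v \<theta>)) = (\<lambda>(\<theta>, \<omega>). S *v \<theta>)"
    by (rule blinfun_apply_Blinfun_linear)
  then show ?thesis by (simp add: C_std_def)
qed

lemma A_std_intertwine:
  assumes "L *v u = lam *\<^sub>R u"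
  shows "A_std L m \<tau> o\<^sub>L std_embed u = std_embed u o\<^sub>L std_mode m \<tau> lam"
  by (rule blinfun_eqI)
    (simp add: A_std_apply std_embed_apply std_mode_apply matrix_vector_mult_scaleR assms algebra_simps)

lemma std_mode_output_integral:
  assumes "\<alpha> \<ge> 0" "m > 0" "\<tau> > 0" "lam > 0"
  shows "((\<lambda>t. (sqrt (\<alpha> * lam) * fst (blin_exp (t *\<^sub>R std_mode m \<tau> lam) (0, 1 / \<tau>)))\<^sup>2)
    has_integral \<alpha> / (2 * m)) {0..}"
proof -
  define s where "s t = blin_exp (t *\<^sub>R std_mode m \<tau> lam) (0, 1 / \<tau>)" for t
  have "((\<lambda>t. fst (s t)) has_real_derivative snd (s t)) (at t)" for t
    using has_real_derivative_blin_exp_linear[OF bounded_linear_fst,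
        where M="std_mode m \<tau> lam" and p="(0, 1 / \<tau>)" and t=t]
    by (simp add: s_def std_mode_apply)
  moreover have "((\<lambda>t. snd (s t)) has_real_derivative (- (m * lam) * fst (s t) - snd (s t)) / \<tau>) (at t)" for t
    using has_real_derivative_blin_exp_linear[OF bounded_linear_snd,
        where M="std_mode m \<tau> lam" and p="(0, 1 / \<tau>)" and t=t] \<open>\<tau> > 0\<close>
    by (simp add: s_def std_mode_apply field_simps)
  moreover have "s 0 = (0, 1 / \<tau>)" by (simp add: s_def blin_exp_zero)
  ultimately have "((\<lambda>t. (fst (s t))\<^sup>2) has_integral \<tau>\<^sup>2 * (1 / \<tau>)\<^sup>2 / (2 * (m * lam))) {0..}"
    using assms
    by (intro damped_oscillator_sq_integral[where \<theta>="\<lambda>t. fst (s t)" and \<omega>="\<lambda>t. snd (s t)"]) auto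
  then have "((\<lambda>t. (fst (s t))\<^sup>2) has_integral 1 / (2 * (m * lam))) {0..}"
    using assms by (simp add: power_one_over)
  from has_integral_mult_right[OF this, of "\<alpha> * lam"]
  have "((\<lambda>t. \<alpha> * lam * (fst (s t))\<^sup>2) has_integral \<alpha> / (2 * m)) {0..}"
    using assms by simp
  moreover have "(sqrt (\<alpha> * lam) * x)\<^sup>2 = \<alpha> * lam * x\<^sup>2" for x
    using assms by (simp add: power_mult_distrib)
  ultimately show ?thesis by (simp add: s_def)
qed

lemma sum_atLeast1_if_first:
  "(\<Sum>i\<in>{1..n}. if i = 1 then 0 else f i) = (\<Sum>i\<in>{2..n}. f i)" for n :: nat
  by (cases "n = 0") (simp_all add: sum.atLeast_Suc_atMost numeral_2_eq_2)

lemma H2sq_std_eq: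
  fixes W :: "real^'n^'n"
  assumes "\<alpha> > 0" "m > 0" "\<tau> > 0"
    and W: "weighted_connected_graph W" and "ordered_eigenvalues (laplacian W) lam"
  shows "H2sq_std W \<alpha> m \<tau> = \<alpha> / (2 * m) * (real CARD('n) - 1)"
proof -
  obtain v where onb: "onb v" and ev: "\<And>i. i \<in> {1..CARD('n)} \<Longrightarrow> laplacian W *v v i = lam i *\<^sub>R v i"
    and "lam 1 = 0" and lam_pos: "\<And>i. i \<in> {2..CARD('n)} \<Longrightarrow> lam i > 0"
    and root: "\<And>i. i \<in> {1..CARD('n)} \<Longrightarrow>
      psd_sqrt (\<alpha> *\<^sub>R laplacian W) *v v i = sqrt (\<alpha> * lam i) *\<^sub>R v i"
    using laplacian_spectral_data[OF W assms(5)] \<open>\<alpha> > 0\<close> by (metis less_imp_le)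
  have "H2sq_std W \<alpha> m \<tau> = (\<Sum>i\<in>{1..CARD('n)}. if i = 1 then 0 else \<alpha> / (2 * m))"
    unfolding H2sq_std_def
  proof (rule H2_sq_onb_diagonal[OF onb])
    show "(C_std (psd_sqrt (\<alpha> *\<^sub>R laplacian W)) o\<^sub>L blin_exp (t *\<^sub>R A_std (laplacian W) m \<tau>) o\<^sub>L B_std \<tau>) x
      = (\<Sum>i\<in>{1..CARD('n)}. (sqrt (\<alpha> * lam i) * fst (blin_exp (t *\<^sub>R std_mode m \<tau> (lam i)) (0, 1 / \<tau>))
          * (v i \<bullet> x)) *\<^sub>R v i)" for t x
      by (rule impulse_response_onb_expansion[OF onb ev root A_std_intertwine])
        (auto intro!: linearI simp: B_std_apply std_embed_apply C_std_apply matrix_vector_mult_scaleR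
          scaleR_add_left scaleR_add_right)
    fix i assume "i \<in> {1..CARD('n)}"
    show "((\<lambda>t. (sqrt (\<alpha> * lam i) * fst (blin_exp (t *\<^sub>R std_mode m \<tau> (lam i)) (0, 1 / \<tau>)))\<^sup>2)
        has_integral (if i = 1 then 0 else \<alpha> / (2 * m))) {0..}"
    proof (cases "i = 1")
      case False
      with \<open>i \<in> {1..CARD('n)}\<close> have "lam i > 0" by (intro lam_pos) auto
      with False show ?thesis using std_mode_output_integral assms by simp
    next
      case True
      then have "lam i = 0" using \<open>lam 1 = 0\<close> by simp
      with True show ?thesis by simp
    qed
  qed
  also have "\<dots> = \<alpha> / (2 * m) * (real CARD('n) - 1)"
    using sum_atLeast1_if_first[where n="CARD('n)" and f="\<lambda>_. \<alpha> / (2 * m)"] by (simp add: of_nat_diff Suc_leI)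
  finally show ?thesis .
qed

definition dapi_embed :: "real^'n \<Rightarrow> (real \<times> real \<times> real) \<Rightarrow>\<^sub>L ((real^'n) \<times> (real^'n) \<times> (real^'n))" where
  "dapi_embed u = Blinfun (\<lambda>q. (fst q *\<^sub>R u, fst (snd q) *\<^sub>R u, snd (snd q) *\<^sub>R u))"

definition dapi_mode :: "real \<Rightarrow> real \<Rightarrow> real \<Rightarrow> real \<Rightarrow> real \<Rightarrow>
    (real \<times> real \<times> real) \<Rightarrow>\<^sub>L (real \<times> real \<times> real)" where
  "dapi_mode m \<tau> k \<gamma> lam = Blinfun (\<lambda>q. (fst (snd q),
     - (m / \<tau>) * lam * fst q - fst (snd q) / \<tau> + snd (snd q) / \<tau>,
     - fst (snd q) / k - (\<gamma> / k) * lam * snd (snd q)))"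

lemma dapi_embed_apply: "dapi_embed u q = (fst q *\<^sub>R u, fst (snd q) *\<^sub>R u, snd (snd q) *\<^sub>R u)"
  unfolding dapi_embed_def
  by (subst blinfun_apply_Blinfun_linear) (auto intro!: linearI simp: algebra_simps)

lemma dapi_mode_apply:
  "dapi_mode m \<tau> k \<gamma> lam q = (fst (snd q),
     - (m / \<tau>) * lam * fst q - fst (snd q) / \<tau> + snd (snd q) / \<tau>,
     - fst (snd q) / k - (\<gamma> / k) * lam * snd (snd q))"
  unfolding dapi_mode_def
  by (subst blinfun_apply_Blinfun_linear)
    (auto intro!: linearI simp: algebra_simps add_divide_distrib diff_divide_distrib)

lemma A_dapi_apply:
  "A_dapi L m \<tau> k \<gamma> (\<theta>, \<omega>, \<Omega>) = (\<omega>,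
     - (m / \<tau>) *\<^sub>R (L *v \<theta>) - (1 / \<tau>) *\<^sub>R \<omega> + (1 / \<tau>) *\<^sub>R \<Omega>,
     - (1 / k) *\<^sub>R \<omega> - (\<gamma> / k) *\<^sub>R (L *v \<Omega>))"
  unfolding A_dapi_def
  by (subst blinfun_apply_Blinfun_linear)
    (auto intro!: linearI simp: matrix_vector_right_distrib matrix_vector_mult_scaleR algebra_simps)

lemma B_dapi_apply: "B_dapi \<tau> w = (0, (1 / \<tau>) *\<^sub>R w, 0)"
  unfolding B_dapi_def
  by (subst blinfun_apply_Blinfun_linear) (auto intro!: linearI simp: algebra_simps)

lemma C_dapi_apply:
  fixes S :: "real^'n^'n"
  shows "C_dapi S (\<theta>, \<omega>, \<Omega>) = S *v \<theta>"
proof -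
  have "linear (\<lambda>(\<theta>, \<omega> :: real^'n, \<Omega> :: real^'n). S *v \<theta>)"
    by (intro linearI) (auto simp: matrix_vector_right_distrib matrix_vector_mult_scaleR)
  then have "blinfun_apply (Blinfun (\<lambda>(\<theta>, \<omega> :: real^'n, \<Omega> :: real^'n). S *v \<theta>))
      = (\<lambda>(\<theta>, \<omega>, \<Omega>). S *v \<theta>)"
    by (rule blinfun_apply_Blinfun_linear)
  then show ?thesis by (simp add: C_dapi_def)
qed

lemma A_dapi_intertwine:
  assumes "L *v u = lam *\<^sub>R u"
  shows "A_dapi L m \<tau> k \<gamma> o\<^sub>L dapi_embed u = dapi_embed u o\<^sub>L dapi_mode m \<tau> k \<gamma> lam"
proof (rule blinfun_eqI)
  fix q :: "real \<times> real \<times> real"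
  show "(A_dapi L m \<tau> k \<gamma> o\<^sub>L dapi_embed u) q = (dapi_embed u o\<^sub>L dapi_mode m \<tau> k \<gamma> lam) q"
    by (cases q) (simp add: A_dapi_apply dapi_embed_apply dapi_mode_apply matrix_vector_mult_scaleR
        assms algebra_simps)
qed

lemma dapi_mode_output_integral:
  assumes "\<alpha> \<ge> 0" "m > 0" "\<tau> > 0" "k > 0" "\<gamma> > 0" "lam > 0"
  shows "((\<lambda>t. (sqrt (\<alpha> * lam) * fst (blin_exp (t *\<^sub>R dapi_mode m \<tau> k \<gamma> lam) (0, 1 / \<tau>, 0)))\<^sup>2)
    has_integral phi \<alpha> m \<tau> k \<gamma> lam) {0..}"
proof -
  define s where "s t = blin_exp (t *\<^sub>R dapi_mode m \<tau> k \<gamma> lam) (0, 1 / \<tau>, 0)" for t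
  define N where "N = \<gamma> * lam * (\<gamma> * \<tau> * lam + k) + k\<^sup>2 * m * lam"
  have N_pos: "N > 0" using assms by (simp add: N_def add_pos_pos)
  have "((\<lambda>t. fst (s t)) has_real_derivative fst (snd (s t))) (at t)" for t
    using has_real_derivative_blin_exp_linear[OF bounded_linear_fst,
        where M="dapi_mode m \<tau> k \<gamma> lam" and p="(0, 1 / \<tau>, 0)" and t=t]
    by (simp add: s_def dapi_mode_apply)
  moreover have "((\<lambda>t. fst (snd (s t))) has_real_derivative
      (- (m * lam) * fst (s t) - fst (snd (s t)) + snd (snd (s t))) / \<tau>) (at t)" for t
    using has_real_derivative_blin_exp_linear[OF bounded_linear_compose[OF bounded_linear_fst bounded_linear_snd],
        where M="dapi_mode m \<tau> k \<gamma> lam" and p="(0, 1 / \<tau>, 0)" and t=t] \<open>\<tau> > 0\<close>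
    by (simp add: s_def dapi_mode_apply field_simps)
  moreover have "((\<lambda>t. snd (snd (s t))) has_real_derivative
      (- fst (snd (s t)) - (\<gamma> * lam) * snd (snd (s t))) / k) (at t)" for t
    using has_real_derivative_blin_exp_linear[OF bounded_linear_compose[OF bounded_linear_snd bounded_linear_snd],
        where M="dapi_mode m \<tau> k \<gamma> lam" and p="(0, 1 / \<tau>, 0)" and t=t] \<open>k > 0\<close>
    by (simp add: s_def dapi_mode_apply field_simps)
  moreover have "s 0 = (0, 1 / \<tau>, 0)" by (simp add: s_def blin_exp_zero)
  moreover have "k\<^sup>2 * (m * lam) + \<gamma> * lam * k + (\<gamma> * lam)\<^sup>2 * \<tau> = N"
    by (simp add: N_def algebra_simps power2_eq_square)
  ultimately have "((\<lambda>t. (fst (s t))\<^sup>2) has_integral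
      \<tau>\<^sup>2 * N * (1 / \<tau>)\<^sup>2 / (2 * (m * lam) * (N + \<gamma> * lam * \<tau> + k))) {0..}"
    using dapi_oscillator_sq_integral[where \<theta>="\<lambda>t. fst (s t)" and \<omega>="\<lambda>t. fst (snd (s t))"
        and \<Omega>="\<lambda>t. snd (snd (s t))" and \<mu>="m * lam" and g="\<gamma> * lam" and k=k and \<tau>=\<tau>] assms
    by simp
  then have "((\<lambda>t. (fst (s t))\<^sup>2) has_integral N / (2 * (m * lam) * (N + \<gamma> * lam * \<tau> + k))) {0..}"
    using assms by (simp add: power_one_over)
  from has_integral_mult_right[OF this, of "\<alpha> * lam"]
  have "((\<lambda>t. \<alpha> * lam * (fst (s t))\<^sup>2) has_integral phi \<alpha> m \<tau> k \<gamma> lam) {0..}"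
    using assms N_pos by (simp add: phi_def flip: N_def) (simp add: field_simps)
  moreover have "(sqrt (\<alpha> * lam) * x)\<^sup>2 = \<alpha> * lam * x\<^sup>2" for x
    using assms by (simp add: power_mult_distrib)
  ultimately show ?thesis by (simp add: s_def)
qed

lemma H2sq_dapi_eq:
  fixes W :: "real^'n^'n"
  assumes "\<alpha> > 0" "m > 0" "\<tau> > 0" "k > 0" "\<gamma> > 0"
    and W: "weighted_connected_graph W" and "ordered_eigenvalues (laplacian W) lam"
  shows "H2sq_dapi W \<alpha> m \<tau> k \<gamma> = (\<Sum>i\<in>{2..CARD('n)}. phi \<alpha> m \<tau> k \<gamma> (lam i))"
proof -
  obtain v where onb: "onb v" and ev: "\<And>i. i \<in> {1..CARD('n)} \<Longrightarrow> laplacian W *v v i = lam i *\<^sub>R v i"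
    and "lam 1 = 0" and lam_pos: "\<And>i. i \<in> {2..CARD('n)} \<Longrightarrow> lam i > 0"
    and root: "\<And>i. i \<in> {1..CARD('n)} \<Longrightarrow>
      psd_sqrt (\<alpha> *\<^sub>R laplacian W) *v v i = sqrt (\<alpha> * lam i) *\<^sub>R v i"
    using laplacian_spectral_data[OF W assms(7)] \<open>\<alpha> > 0\<close> by (metis less_imp_le)
  have "H2sq_dapi W \<alpha> m \<tau> k \<gamma> = (\<Sum>i\<in>{1..CARD('n)}. if i = 1 then 0 else phi \<alpha> m \<tau> k \<gamma> (lam i))"
    unfolding H2sq_dapi_def
  proof (rule H2_sq_onb_diagonal[OF onb])
    show "(C_dapi (psd_sqrt (\<alpha> *\<^sub>R laplacian W)) o\<^sub>L blin_exp (t *\<^sub>R A_dapi (laplacian W) m \<tau> k \<gamma>)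
        o\<^sub>L B_dapi \<tau>) x
      = (\<Sum>i\<in>{1..CARD('n)}. (sqrt (\<alpha> * lam i)
          * fst (blin_exp (t *\<^sub>R dapi_mode m \<tau> k \<gamma> (lam i)) (0, 1 / \<tau>, 0)) * (v i \<bullet> x)) *\<^sub>R v i)"
      for t x
      by (rule impulse_response_onb_expansion[OF onb ev root A_dapi_intertwine])
        (auto intro!: linearI simp: B_dapi_apply dapi_embed_apply C_dapi_apply matrix_vector_mult_scaleR
          scaleR_add_left scaleR_add_right)
    fix i assume "i \<in> {1..CARD('n)}"
    show "((\<lambda>t. (sqrt (\<alpha> * lam i)
        * fst (blin_exp (t *\<^sub>R dapi_mode m \<tau> k \<gamma> (lam i)) (0, 1 / \<tau>, 0)))\<^sup>2)
        has_integral (if i = 1 then 0 else phi \<alpha> m \<tau> k \<gamma> (lam i))) {0..}"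
    proof (cases "i = 1")
      case False
      with \<open>i \<in> {1..CARD('n)}\<close> have "lam i > 0" by (intro lam_pos) auto
      with False show ?thesis using dapi_mode_output_integral assms by simp
    next
      case True
      then have "lam i = 0" using \<open>lam 1 = 0\<close> by simp
      with True show ?thesis by simp
    qed
  qed
  also have "\<dots> = (\<Sum>i\<in>{2..CARD('n)}. phi \<alpha> m \<tau> k \<gamma> (lam i))"
    by (rule sum_atLeast1_if_first)
  finally show ?thesis .
qed

lemma phi_strict_mono:
  fixes \<alpha> m \<tau> k \<gamma> :: real
  assumes "\<alpha> > 0" "m > 0" "\<tau> > 0" "k > 0" "\<gamma> > 0"
  shows "strict_mono_on {0<..} (phi \<alpha> m \<tau> k \<gamma>)"
proof (rule strict_mono_onI)
  fix x y :: real assume "x \<in> {0<..}" "y \<in> {0<..}" "x < y"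
  define D where "D z = \<gamma> * \<tau> * z + k" for z
  define N where "N z = \<gamma> * z * (\<gamma> * \<tau> * z + k) + k\<^sup>2 * m * z" for z
  have D_pos: "D z > 0" and N_pos: "N z > 0" if "z > 0" for z
    using assms that by (simp_all add: D_def N_def add_pos_pos)
  \<comment> \<open>cross-multiplying shows that \<open>D / N\<close> is strictly decreasing\<close>
  have "D x * N y - D y * N x = (\<gamma> * D x * D y + k ^ 3 * m) * (y - x)"
    by (simp add: D_def N_def power2_eq_square power3_eq_cube algebra_simps)
  also have "\<dots> > 0"
    using assms D_pos \<open>x \<in> {0<..}\<close> \<open>y \<in> {0<..}\<close> \<open>x < y\<close> by (intro mult_pos_pos add_pos_pos) auto
  finally have "D y / N y < D x / N x"
    using N_pos \<open>x \<in> {0<..}\<close> \<open>y \<in> {0<..}\<close> by (simp add: field_simps)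
  moreover have "0 < 1 + D y / N y"
    using D_pos N_pos \<open>y \<in> {0<..}\<close> by (simp add: add_pos_pos)
  ultimately have "1 / (1 + D x / N x) < 1 / (1 + D y / N y)"
    by (intro divide_strict_left_mono) auto
  then have "\<alpha> / (2 * m) * (1 / (1 + D x / N x)) < \<alpha> / (2 * m) * (1 / (1 + D y / N y))"
    using assms by (intro mult_strict_left_mono) auto
  then show "phi \<alpha> m \<tau> k \<gamma> x < phi \<alpha> m \<tau> k \<gamma> y"
    by (simp add: phi_def D_def N_def)
qed

theorem mainTheorem3:
  fixes \<alpha> m \<tau> k \<gamma> :: real
    and W W' :: "real^'n^'n"
    and lam lam' :: "nat \<Rightarrow> real"
  assumes "\<alpha> > 0" "m > 0" "\<tau> > 0" "k > 0" "\<gamma> > 0"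
    and "weighted_connected_graph W" "weighted_connected_graph W'"
    and "ordered_eigenvalues (laplacian W) lam"
    and "ordered_eigenvalues (laplacian W') lam'"
    and "\<forall>n\<in>{1..CARD('n)}. lam n \<le> lam' n"
  shows "strict_mono_on {0<..} (phi \<alpha> m \<tau> k \<gamma>)
    \<and> H2sq_dapi W \<alpha> m \<tau> k \<gamma> \<le> H2sq_dapi W' \<alpha> m \<tau> k \<gamma>
    \<and> H2sq_std W \<alpha> m \<tau> = \<alpha> / (2 * m) * (real CARD('n) - 1)
    \<and> H2sq_std W' \<alpha> m \<tau> = \<alpha> / (2 * m) * (real CARD('n) - 1)"
proof (intro conjI)
  show mono: "strict_mono_on {0<..} (phi \<alpha> m \<tau> k \<gamma>)"
    using phi_strict_mono assms(1-5) by blast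
  obtain v where "\<And>i. i \<in> {2..CARD('n)} \<Longrightarrow> lam i > 0"
    using laplacian_spectral_data[OF assms(6,8), of 0] by auto
  then have "phi \<alpha> m \<tau> k \<gamma> (lam i) \<le> phi \<alpha> m \<tau> k \<gamma> (lam' i)" if "i \<in> {2..CARD('n)}" for i
    using strict_mono_on_leD[OF mono] assms(10) that by force
  then show "H2sq_dapi W \<alpha> m \<tau> k \<gamma> \<le> H2sq_dapi W' \<alpha> m \<tau> k \<gamma>"
    unfolding H2sq_dapi_eq[OF assms(1-6,8)] H2sq_dapi_eq[OF assms(1-5,7,9)] by (rule sum_mono)
  show "H2sq_std W \<alpha> m \<tau> = \<alpha> / (2 * m) * (real CARD('n) - 1)"
    "H2sq_std W' \<alpha> m \<tau> = \<alpha> / (2 * m) * (real CARD('n) - 1)"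
    using H2sq_std_eq assms by blast+
qed

end
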